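(* Fix an integer $0\le s\le d-2$ and a positive real $\lambda$. Let $E$ be an origin-centered ellipsoid in $\mathbb{R}^d$ whose principal semi-axes have lengths $\lambda,\lambda^2,\dots,\lambda^d$. Let $E'$ be a largest-volume ellipsoid of revolution with an $s$-dimensional axis contained in $E$, and let $F$ be the ($s$-dimensional) axis of $E'$. Then \[ \frac{\mathrm{vol}_d(E')}{\mathrm{vol}_d(E)}\le\frac1\lambda\quad\text{and}\quad E\cap F^\perp\not\subset x+\lambda\cdot\operatorname{int}(P_{F^\perp}E')\ \text{ for all } x\in\mathbb{R}^d. \]
   Context: For a linear subspace $F$, an $F$-operator is an invertible linear operator $A$ on $\mathbb{R}^d$ such that $F$ and $F^\perp$ are invariant under $A$ and $A|_{F^\perp}$ is a nonzero multiple of the identity on $F^\perp$. An ellipsoid of revolution with axis $F$ is a set $AB^d+z$, $A$ an $F$-operator, $z\in\mathbb{R}^d$, where $B^d$ is the closed unit ball; an ellipsoid of revolution with an $s$-dimensional axis is one with axis some $s$-dimensional subspace $F$. $P_{F^\perp}$ is orthogonal projection onto $F^\perp$. *)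

theory Defs
  imports "HOL-Analysis.Analysis"
begin

definition orth_proj :: "'a::euclidean_space set \<Rightarrow> 'a \<Rightarrow> 'a" where
  "orth_proj V x = (THE y. y \<in> V \<and> (\<forall>z\<in>V. (x - y) \<bullet> z = 0))"

definition F_operator :: "'a::euclidean_space set \<Rightarrow> ('a \<Rightarrow> 'a) \<Rightarrow> bool" where
  "F_operator F A \<longleftrightarrow> linear A \<and> bij A \<and> A ` F \<subseteq> F \<and> A ` (F\<^sup>\<bottom>) \<subseteq> F\<^sup>\<bottom> \<and>
     (\<exists>c. c \<noteq> 0 \<and> (\<forall>x\<in>F\<^sup>\<bottom>. A x = c *\<^sub>R x))"

definition ellipsoid_rev :: "'a::euclidean_space set \<Rightarrow> 'a set \<Rightarrow> bool" where
  "ellipsoid_rev F S \<longleftrightarrow> (\<exists>A z. F_operator F A \<and> S = (\<lambda>x. A x + z) ` cball 0 1)"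

definition ellipsoid_rev_dim :: "nat \<Rightarrow> 'a::euclidean_space set \<Rightarrow> bool" where
  "ellipsoid_rev_dim s S \<longleftrightarrow> (\<exists>F. subspace F \<and> dim F = s \<and> ellipsoid_rev F S)"

end

theory Submission
  imports Defs
begin

text \<open>Write E' = A B + z, where A acts on \<open>F\<^sup>\<bottom>\<close> as multiplication by c. As E is
  symmetric and convex, A B is contained in E. Let \<open>\<sigma>\<^sub>0 \<ge> \<dots> \<ge> \<sigma>\<^bsub>d-1\<^esub>\<close> be the
  singular values of A. Courant--Fischer gives \<open>\<sigma>\<^sub>k \<le> \<lambda>\<^bsup>d-k\<^esup>\<close>, and \<open>\<bar>c\<bar>\<close> is a
  singular value of multiplicity at least \<open>m = dim F\<^sup>\<bottom> \<ge> 2\<close>, attained on an interval J of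
  indices. On J the bound improves to \<open>\<lambda>\<^bsup>d - max J\<^esup>\<close>, which divides the product of
  the bounds, \<open>vol E / vol B\<close>, by \<open>\<lambda>\<^sup>T\<close> with \<open>T = \<Sum>j\<in>J. max J - j \<ge> 1\<close>. Hence
  \<open>vol E' \<le> vol E / \<lambda>\<close> for \<open>\<lambda> \<ge> 1\<close>; for \<open>\<lambda> \<le> 1\<close> the bound is trivial.

  The projection of E' onto \<open>F\<^sup>\<bottom>\<close> lies in a ball of radius \<open>\<bar>c\<bar>\<close>; since E is
  symmetric, the second claim follows from a vector \<open>y \<in> E \<inter> F\<^sup>\<bottom>\<close> with
  \<open>\<lambda> \<bar>c\<bar> \<le> \<bar>y\<bar>\<close>. For \<open>\<lambda> \<le> 1\<close> the image under A of a unit vector of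
  \<open>F\<^sup>\<bottom>\<close> will do. For \<open>\<lambda> > 1\<close> we compare E' with the ellipsoid of revolution obtained
  from E by shrinking its m shortest axes to length \<open>\<lambda>\<close>, of volume
  \<open>vol E / \<lambda>\<^bsup>m(m-1)/2\<^esup>\<close>. Maximality of E' forces \<open>card J = m\<close> and equality in all
  the bounds above. Equality in Courant--Fischer aligns the singular directions of A outside J
  with axes of E, so F is spanned by axes of E, and \<open>F\<^sup>\<bottom>\<close> contains the axis of length
  \<open>\<lambda>\<^bsup>d - min J\<^esup> \<ge> \<lambda> \<bar>c\<bar>\<close>.\<close>

section \<open>Lebesgue measure of linear images\<close>

text \<open>The library computes the measure of a linear image only on the coordinate spaces
  real^'n with 'n::{finite, wellorder}; an arbitrary Euclidean space is transported there by
  indexing its coordinates with its own basis.\<close>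

typedef (overloaded) ('a::euclidean_space) basis_index = "Basis :: 'a set"
  morphisms basis_vector Abs_basis_index
  using nonempty_Basis by blast

instance basis_index :: (euclidean_space) finite
proof
  have "(UNIV :: 'a basis_index set) = Abs_basis_index ` Basis"
    using type_definition.univ[OF type_definition_basis_index] .
  then show "finite (UNIV :: 'a basis_index set)"
    by (metis finite_Basis finite_imageI)
qed

definition basis_rank :: "'a::euclidean_space basis_index \<Rightarrow> nat" where
  "basis_rank = (SOME f. inj f)"

lemma inj_basis_rank: "inj basis_rank"
proof -
  have "\<exists>f :: 'a basis_index \<Rightarrow> nat. inj f"
    using finite_imp_inj_to_nat_seg[of "UNIV :: 'a basis_index set"] by blast
  then show ?thesis
    unfolding basis_rank_def by (rule someI_ex)
qed

instantiation basis_index :: (euclidean_space) wellorder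
begin

definition less_eq_basis_index :: "'a basis_index \<Rightarrow> 'a basis_index \<Rightarrow> bool" where
  "less_eq_basis_index i j \<longleftrightarrow> basis_rank i \<le> basis_rank j"

definition less_basis_index :: "'a basis_index \<Rightarrow> 'a basis_index \<Rightarrow> bool" where
  "less_basis_index i j \<longleftrightarrow> basis_rank i < basis_rank j"

instance
proof
  fix x y z :: "'a basis_index"
  show "(x < y) = (x \<le> y \<and> \<not> y \<le> x)" "x \<le> x" "x \<le> y \<or> y \<le> x"
    by (auto simp: less_eq_basis_index_def less_basis_index_def)
  show "x \<le> y \<Longrightarrow> y \<le> z \<Longrightarrow> x \<le> z"
    by (simp add: less_eq_basis_index_def)
  show "x \<le> y \<Longrightarrow> y \<le> x \<Longrightarrow> x = y"
    using inj_basis_rank unfolding less_eq_basis_index_def inj_def by (metis antisym)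
next
  fix P :: "'a basis_index \<Rightarrow> bool" and a
  assume step: "\<And>x. (\<And>y. y < x \<Longrightarrow> P y) \<Longrightarrow> P x"
  have "\<And>x. basis_rank x = k \<Longrightarrow> P x" for k
  proof (induction k rule: less_induct)
    case (less k)
    then show ?case
      using step by (auto simp: less_basis_index_def)
  qed
  then show "P a" by blast
qed

end

lemma bij_betw_basis_vector: "bij_betw basis_vector (UNIV :: 'a::euclidean_space basis_index set) Basis"
  by (metis bij_betw_def type_definition.Rep_range type_definition_basis_index inj_on_def
      basis_vector_inject)

lemma inner_basis_vector: "basis_vector i \<bullet> basis_vector j = (if i = j then 1 else 0)"
  using basis_vector[of i] basis_vector[of j] basis_vector_inject[of i j]
  by (auto simp: inner_Basis)

definition coords :: "'a::euclidean_space \<Rightarrow> real^('a basis_index)" where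
  "coords x = (\<chi> i. x \<bullet> basis_vector i)"

definition from_coords :: "real^('a::euclidean_space basis_index) \<Rightarrow> 'a" where
  "from_coords v = (\<Sum>i\<in>UNIV. (v $ i) *\<^sub>R basis_vector i)"

lemma coords_nth [simp]: "coords x $ i = x \<bullet> basis_vector i"
  by (simp add: coords_def)

lemma inner_from_coords: "from_coords v \<bullet> basis_vector j = v $ j"
proof -
  have "from_coords v \<bullet> basis_vector j = (\<Sum>i\<in>UNIV. v $ i * (basis_vector i \<bullet> basis_vector j))"
    by (simp add: from_coords_def inner_sum_left)
  also have "\<dots> = v $ j"
    by (simp add: inner_basis_vector if_distrib cong: if_cong)
  finally show ?thesis .
qed

lemma coords_from_coords [simp]: "coords (from_coords v) = v"
  by (simp add: vec_eq_iff inner_from_coords)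

lemma from_coords_coords [simp]: "from_coords (coords x) = x"
proof -
  have "from_coords (coords x) = (\<Sum>b\<in>Basis. (x \<bullet> b) *\<^sub>R b)"
    using sum.reindex_bij_betw[OF bij_betw_basis_vector, of "\<lambda>b. (x \<bullet> b) *\<^sub>R b"]
    by (simp add: from_coords_def)
  then show ?thesis
    by (simp add: euclidean_representation)
qed

lemma linear_coords: "linear coords"
  by (auto simp: linear_iff vec_eq_iff inner_add_left)

lemma linear_from_coords: "linear from_coords"
  by (auto simp: linear_iff from_coords_def scaleR_add_left sum.distrib scaleR_sum_right)

lemma vimage_from_coords: "from_coords -` S = coords ` S"
  by (auto simp: image_iff) (metis from_coords_coords coords_from_coords)+

lemma from_coords_axis: "from_coords (axis j 1) = basis_vector j"
proof -
  have "from_coords (axis j 1) = (\<Sum>i\<in>UNIV. if i = j then basis_vector i else 0)"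
    unfolding from_coords_def by (rule sum.cong) (auto simp: axis_def)
  then show ?thesis by simp
qed

lemma measurable_from_coords [measurable]: "from_coords \<in> borel \<rightarrow>\<^sub>M (borel :: 'a::euclidean_space measure)"
proof -
  have "bounded_linear (from_coords :: _ \<Rightarrow> 'a)"
    using linear_from_coords linear_linear by blast
  then show ?thesis
    by (intro borel_measurable_continuous_onI linear_continuous_on)
qed

lemma distr_lborel_from_coords:
  "distr lborel borel (from_coords :: _ \<Rightarrow> 'a::euclidean_space) = lborel"
proof (rule lborel_eqI[symmetric])
  fix l u :: 'a
  assume le: "\<And>b. b \<in> Basis \<Longrightarrow> l \<bullet> b \<le> u \<bullet> b"
  have Basis_eq: "Basis = basis_vector ` (UNIV :: 'a basis_index set)"
    using bij_betw_basis_vector by (auto simp: bij_betw_def)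
  have box: "from_coords -` box l u = box (coords l) (coords u)"
    unfolding set_eq_iff vimage_eq mem_box_cart mem_box Basis_eq ball_simps
    by (simp add: inner_from_coords)
  have le': "\<forall>b\<in>Basis. coords l \<bullet> b \<le> coords u \<bullet> b"
    using le basis_vector by (auto simp: Basis_vec_def inner_axis)
  have "(\<Prod>b\<in>Basis. (coords u - coords l) \<bullet> b) = (\<Prod>i\<in>UNIV. (u - l) \<bullet> basis_vector i)"
  proof -
    have "(Basis :: (real^'a basis_index) set) = (\<lambda>i. axis i 1) ` UNIV"
      by (auto simp: Basis_vec_def)
    moreover have "inj (\<lambda>i::'a basis_index. axis i (1::real))"
      by (auto simp: inj_def axis_eq_axis)
    ultimately have "(\<Prod>b\<in>Basis. (coords u - coords l) \<bullet> b)
        = (\<Prod>i\<in>UNIV. (coords u - coords l) \<bullet> axis i 1)"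
      by (metis (no_types, lifting) comp_apply prod.cong prod.reindex)
    then show ?thesis
      by (simp add: inner_axis inner_diff_left)
  qed
  also have "\<dots> = (\<Prod>b\<in>Basis. (u - l) \<bullet> b)"
    using prod.reindex_bij_betw[OF bij_betw_basis_vector, of "\<lambda>b. (u - l) \<bullet> b"] by simp
  finally show "emeasure (distr lborel borel from_coords) (box l u) = (\<Prod>b\<in>Basis. (u - l) \<bullet> b)"
    using le' by (simp add: emeasure_distr box emeasure_lborel_box_eq)
qed simp

lemma measure_coords_image:
  fixes S :: "'a::euclidean_space set"
  assumes S: "S \<in> sets borel"
  shows "measure lebesgue (coords ` S) = measure lebesgue S"
proof -
  have "coords ` S \<in> sets borel"
    using measurable_sets[OF measurable_from_coords S] by (simp add: vimage_from_coords)
  moreover have "measure lborel (from_coords -` S \<inter> space lborel) = measure (distr lborel borel from_coords) S"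
    using S by (simp add: measure_distr)
  ultimately show ?thesis
    using S by (simp add: vimage_from_coords distr_lborel_from_coords)
qed

definition volume_factor :: "('a::euclidean_space \<Rightarrow> 'a) \<Rightarrow> real" where
  "volume_factor f = \<bar>det (matrix (coords \<circ> f \<circ> from_coords))\<bar>"

lemma measure_linear_image_compact:
  fixes f :: "'a::euclidean_space \<Rightarrow> 'a"
  assumes f: "linear f" and S: "compact S"
  shows "measure lebesgue (f ` S) = volume_factor f * measure lebesgue S"
proof -
  define g where "g = coords \<circ> f \<circ> from_coords"
  have g: "linear g"
    unfolding g_def by (intro linear_compose linear_coords linear_from_coords f)
  have compact_image: "compact (h ` K)" if "linear h" "compact K"
    for h :: "'b::euclidean_space \<Rightarrow> 'c::euclidean_space" and K
    using that by (metis compact_continuous_image linear_continuous_on linear_linear)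
  have borel: "K \<in> sets borel" if "compact K" for K :: "'b::euclidean_space set"
    using that by (simp add: compact_imp_closed borel_closed)
  have "measure lebesgue (f ` S) = measure lebesgue (coords ` f ` S)"
    using measure_coords_image[OF borel[OF compact_image[OF f S]]] by (rule sym)
  also have "coords ` f ` S = g ` coords ` S"
    by (simp add: g_def image_image)
  also have "measure lebesgue (g ` coords ` S) = \<bar>det (matrix g)\<bar> * measure lebesgue (coords ` S)"
    using g compact_image[OF linear_coords S] by (intro measure_linear_image) (auto intro: lmeasurable_compact)
  also have "measure lebesgue (coords ` S) = measure lebesgue S"
    using measure_coords_image[OF borel[OF S]] .
  finally show ?thesis
    by (simp add: volume_factor_def g_def comp_def)
qed

section \<open>Orthonormal frames\<close>

definition orthonormal_frame :: "(nat \<Rightarrow> 'a::euclidean_space) \<Rightarrow> bool" where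
  "orthonormal_frame v \<longleftrightarrow> (\<forall>i<DIM('a). \<forall>j<DIM('a). v i \<bullet> v j = (if i = j then 1 else 0))"

lemma orthonormal_frameD:
  "orthonormal_frame v \<Longrightarrow> i < DIM('a) \<Longrightarrow> j < DIM('a) \<Longrightarrow>
    (v i :: 'a::euclidean_space) \<bullet> v j = (if i = j then 1 else 0)"
  by (simp add: orthonormal_frame_def)

lemma norm_frame_vector:
  "orthonormal_frame v \<Longrightarrow> i < DIM('a) \<Longrightarrow> norm (v i :: 'a::euclidean_space) = 1"
  by (metis norm_eq_1 orthonormal_frameD)

lemma orthonormal_frame_Basis:
  obtains e :: "nat \<Rightarrow> 'a::euclidean_space"
  where "bij_betw e {..<DIM('a)} Basis" "orthonormal_frame e"
proof -
  obtain e :: "nat \<Rightarrow> 'a" where e: "bij_betw e {..<DIM('a)} Basis"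
    using ex_bij_betw_nat_finite[OF finite_Basis] by (auto simp: atLeast0LessThan)
  have "e i \<bullet> e j = (if i = j then 1 else 0)" if "i < DIM('a)" "j < DIM('a)" for i j
  proof -
    have "e i \<in> Basis" "e j \<in> Basis" "e i = e j \<longleftrightarrow> i = j"
      using e that by (auto simp: bij_betw_def inj_on_def)
    then show ?thesis
      by (simp add: inner_Basis)
  qed
  with e that show ?thesis
    by (simp add: orthonormal_frame_def)
qed

lemma dim_span_frame:
  assumes v: "orthonormal_frame (v :: nat \<Rightarrow> 'a::euclidean_space)" and K: "K \<subseteq> {..<DIM('a)}"
  shows "dim (span (v ` K)) = card K"
proof -
  have ortho: "v i \<bullet> v j = (if i = j then 1 else 0)" if "i \<in> K" "j \<in> K" for i j
    using that K orthonormal_frameD[OF v] by blast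
  then have "pairwise orthogonal (v ` K)"
    by (auto simp: pairwise_def orthogonal_def)
  moreover have "0 \<notin> v ` K"
    using ortho by force
  ultimately have "independent (v ` K)"
    by (rule pairwise_orthogonal_independent)
  moreover have "inj_on v K"
    by (metis inj_onI ortho zero_neq_one)
  ultimately show ?thesis
    by (metis card_image dim_span_eq_card_independent)
qed

lemma inner_frame_sum:
  assumes "orthonormal_frame (v :: nat \<Rightarrow> 'a::euclidean_space)" "k < DIM('a)"
  shows "(\<Sum>i<DIM('a). c i *\<^sub>R v i) \<bullet> v k = c k"
proof -
  have "(\<Sum>i<DIM('a). c i *\<^sub>R v i) \<bullet> v k = (\<Sum>i<DIM('a). if i = k then c i else 0)"
    unfolding inner_sum_left by (rule sum.cong) (use assms in \<open>auto simp: orthonormal_frameD\<close>)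
  also have "\<dots> = c k"
    using assms(2) by simp
  finally show ?thesis .
qed

lemma frame_expansion:
  assumes v: "orthonormal_frame (v :: nat \<Rightarrow> 'a::euclidean_space)"
  shows "x = (\<Sum>i<DIM('a). (x \<bullet> v i) *\<^sub>R v i)"
proof -
  define y where "y = x - (\<Sum>i<DIM('a). (x \<bullet> v i) *\<^sub>R v i)"
  have "dim (span (v ` {..<DIM('a)})) = DIM('a)"
    using dim_span_frame[OF v order_refl] by simp
  then have "span (v ` {..<DIM('a)}) = UNIV"
    by (metis dim_UNIV order_refl subset_UNIV subspace_UNIV subspace_dim_equal subspace_span)
  moreover have "orthogonal y w" if "w \<in> v ` {..<DIM('a)}" for w
    using that by (auto simp: y_def orthogonal_def inner_diff_left inner_frame_sum[OF v])
  ultimately have "orthogonal y y"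
    using orthogonal_to_span[of y "v ` {..<DIM('a)}" y] by auto
  then show ?thesis
    by (simp add: y_def orthogonal_def)
qed

lemma frame_norm_sq:
  assumes v: "orthonormal_frame (v :: nat \<Rightarrow> 'a::euclidean_space)"
  shows "(norm x)\<^sup>2 = (\<Sum>i<DIM('a). (x \<bullet> v i)\<^sup>2)"
proof -
  have "(norm x)\<^sup>2 = x \<bullet> (\<Sum>i<DIM('a). (x \<bullet> v i) *\<^sub>R v i)"
    using frame_expansion[OF v, of x] by (metis power2_norm_eq_inner)
  also have "\<dots> = (\<Sum>i<DIM('a). (x \<bullet> v i)\<^sup>2)"
    by (simp add: inner_sum_right power2_eq_square)
  finally show ?thesis .
qed

lemma frame_eqI:
  assumes "orthonormal_frame (v :: nat \<Rightarrow> 'a::euclidean_space)"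
    and "\<And>i. i < DIM('a) \<Longrightarrow> x \<bullet> v i = y \<bullet> v i"
  shows "x = y"
  using frame_expansion[OF assms(1), of x] frame_expansion[OF assms(1), of y] assms(2) by simp

definition frame_rotation :: "(nat \<Rightarrow> 'a::euclidean_space) \<Rightarrow> (nat \<Rightarrow> 'a) \<Rightarrow> 'a \<Rightarrow> 'a" where
  "frame_rotation p q x = (\<Sum>i<DIM('a). (x \<bullet> p i) *\<^sub>R q i)"

lemma linear_frame_rotation: "linear (frame_rotation p q)"
  by (auto simp: linear_iff frame_rotation_def inner_add_left scaleR_add_left sum.distrib
      scaleR_sum_right)

lemma inner_frame_rotation:
  "orthonormal_frame q \<Longrightarrow> k < DIM('a) \<Longrightarrow> frame_rotation p q x \<bullet> q k = (x::'a::euclidean_space) \<bullet> p k"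
  unfolding frame_rotation_def by (rule inner_frame_sum)

lemma norm_frame_rotation:
  assumes "orthonormal_frame p" "orthonormal_frame (q :: nat \<Rightarrow> 'a::euclidean_space)"
  shows "norm (frame_rotation p q x) = norm x"
proof -
  have "(norm (frame_rotation p q x))\<^sup>2 = (norm x)\<^sup>2"
    using frame_norm_sq[OF assms(2), of "frame_rotation p q x"] frame_norm_sq[OF assms(1), of x]
    by (simp add: inner_frame_rotation[OF assms(2)])
  then show ?thesis by simp
qed

lemma frame_rotation_inverse:
  assumes "orthonormal_frame p" "orthonormal_frame (q :: nat \<Rightarrow> 'a::euclidean_space)"
  shows "frame_rotation q p (frame_rotation p q x) = x"
  by (rule frame_eqI[OF assms(1)]) (simp add: inner_frame_rotation assms)

lemma frame_rotation_cball:
  assumes p: "orthonormal_frame p" and q: "orthonormal_frame (q :: nat \<Rightarrow> 'a::euclidean_space)"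
  shows "frame_rotation p q ` cball 0 1 = cball 0 1"
proof
  show "frame_rotation p q ` cball 0 1 \<subseteq> cball 0 1"
    using norm_frame_rotation[OF p q] by auto
  show "cball 0 1 \<subseteq> frame_rotation p q ` cball 0 1"
  proof
    fix y :: 'a
    assume "y \<in> cball 0 1"
    then have "frame_rotation q p y \<in> cball 0 1"
      using norm_frame_rotation[OF q p] by auto
    then show "y \<in> frame_rotation p q ` cball 0 1"
      using frame_rotation_inverse[OF q p] by (metis image_eqI)
  qed
qed

lemma volume_factor_frame_rotation:
  assumes "orthonormal_frame p" "orthonormal_frame (q :: nat \<Rightarrow> 'a::euclidean_space)"
  shows "volume_factor (frame_rotation p q) = 1"
proof -
  have "measure lebesgue (cball (0::'a) 1) = volume_factor (frame_rotation p q) * measure lebesgue (cball (0::'a) 1)"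
    using measure_linear_image_compact[OF linear_frame_rotation compact_cball, of p q 0 1]
    by (simp add: frame_rotation_cball[OF assms])
  then show ?thesis
    using content_cball_pos[of 1 "0::'a"] by simp
qed

definition frame_scale :: "(nat \<Rightarrow> 'a::euclidean_space) \<Rightarrow> (nat \<Rightarrow> real) \<Rightarrow> 'a \<Rightarrow> 'a" where
  "frame_scale v a x = (\<Sum>i<DIM('a). (a i * (x \<bullet> v i)) *\<^sub>R v i)"

lemma linear_frame_scale: "linear (frame_scale v a)"
  by (auto simp: linear_iff frame_scale_def inner_add_left distrib_left scaleR_add_left sum.distrib
      scaleR_sum_right mult.left_commute)

lemma inner_frame_scale:
  "orthonormal_frame v \<Longrightarrow> k < DIM('a) \<Longrightarrow> frame_scale v a x \<bullet> v k = a k * ((x::'a::euclidean_space) \<bullet> v k)"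
  unfolding frame_scale_def by (rule inner_frame_sum)

lemma frame_scale_frame_scale:
  assumes v: "orthonormal_frame (v :: nat \<Rightarrow> 'a::euclidean_space)"
  shows "frame_scale v a (frame_scale v b x) = frame_scale v (\<lambda>i. a i * b i) x"
  by (rule frame_eqI[OF v]) (simp add: inner_frame_scale[OF v])

lemma frame_scale_id:
  assumes "orthonormal_frame (v :: nat \<Rightarrow> 'a::euclidean_space)" "\<And>i. i < DIM('a) \<Longrightarrow> a i = 1"
  shows "frame_scale v a x = x"
  by (rule frame_eqI[OF assms(1)]) (simp add: inner_frame_scale[OF assms(1)] assms(2))

lemma frame_scale_frame_vector:
  assumes u: "orthonormal_frame (u :: nat \<Rightarrow> 'a::euclidean_space)" and l: "l < DIM('a)"
  shows "frame_scale u a (u l) = a l *\<^sub>R u l"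
  by (rule frame_eqI[OF u]) (use l in \<open>simp add: inner_frame_scale[OF u] orthonormal_frameD[OF u]\<close>)

lemma bij_frame_scale:
  assumes u: "orthonormal_frame (u :: nat \<Rightarrow> 'a::euclidean_space)"
    and a: "\<And>i. i < DIM('a) \<Longrightarrow> a i \<noteq> 0"
  shows "bij (frame_scale u a)"
proof (rule o_bij)
  show "frame_scale u (\<lambda>i. 1 / a i) \<circ> frame_scale u a = id"
    "frame_scale u a \<circ> frame_scale u (\<lambda>i. 1 / a i) = id"
    using a by (auto simp: fun_eq_iff frame_scale_frame_scale[OF u] intro!: frame_scale_id[OF u])
qed

definition diag_scale :: "('a::euclidean_space \<Rightarrow> real) \<Rightarrow> 'a \<Rightarrow> 'a" where
  "diag_scale \<alpha> y = (\<Sum>b\<in>Basis. (\<alpha> b * (y \<bullet> b)) *\<^sub>R b)"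

lemma linear_diag_scale: "linear (diag_scale \<alpha>)"
  by (auto simp: linear_iff diag_scale_def inner_add_left distrib_left scaleR_add_left sum.distrib
      scaleR_sum_right mult.left_commute)

lemma inner_diag_scale:
  assumes b: "b \<in> Basis"
  shows "diag_scale \<alpha> y \<bullet> b = \<alpha> b * (y \<bullet> b)"
proof -
  have "diag_scale \<alpha> y \<bullet> b = (\<Sum>b'\<in>Basis. \<alpha> b' * (y \<bullet> b') * (b' \<bullet> b))"
    by (simp add: diag_scale_def inner_sum_left)
  also have "\<dots> = (\<Sum>b'\<in>Basis. if b' = b then \<alpha> b' * (y \<bullet> b') else 0)"
    by (rule sum.cong) (use b in \<open>auto simp: inner_Basis\<close>)
  also have "\<dots> = \<alpha> b * (y \<bullet> b)"
    using b by simp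
  finally show ?thesis .
qed

lemma volume_factor_diag_scale:
  assumes pos: "\<And>b. b \<in> Basis \<Longrightarrow> \<alpha> b > 0"
  shows "volume_factor (diag_scale \<alpha>) = (\<Prod>b\<in>Basis. \<alpha> b)"
proof -
  let ?M = "matrix (coords \<circ> diag_scale \<alpha> \<circ> from_coords)"
  have diag_scale_basis: "diag_scale \<alpha> b = \<alpha> b *\<^sub>R b" if "b \<in> Basis" for b
    by (rule euclidean_eqI) (use that in \<open>auto simp: inner_diag_scale inner_Basis\<close>)
  have entry: "?M $ i $ j = (if i = j then \<alpha> (basis_vector j) else 0)" for i j
    using basis_vector[of j]
    by (simp add: matrix_def from_coords_axis diag_scale_basis inner_basis_vector)
  have "det ?M = (\<Prod>i\<in>UNIV. \<alpha> (basis_vector i))"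
    by (subst det_diagonal) (auto simp: entry)
  also have "\<dots> = (\<Prod>b\<in>Basis. \<alpha> b)"
    using prod.reindex_bij_betw[OF bij_betw_basis_vector, of \<alpha>] by simp
  finally have "det ?M = (\<Prod>b\<in>Basis. \<alpha> b)" .
  moreover have "(\<Prod>b\<in>Basis. \<alpha> b) > 0"
    using pos by (simp add: prod_pos)
  ultimately show ?thesis
    by (simp add: volume_factor_def)
qed

lemma measure_frame_scale_cball:
  fixes v :: "nat \<Rightarrow> 'a::euclidean_space"
  assumes v: "orthonormal_frame v" and pos: "\<And>i. i < DIM('a) \<Longrightarrow> a i > 0"
  shows "measure lebesgue (frame_scale v a ` cball 0 1)
    = (\<Prod>i<DIM('a). a i) * measure lebesgue (cball (0::'a) 1)"
proof -
  obtain e :: "nat \<Rightarrow> 'a" where e: "bij_betw e {..<DIM('a)} Basis" and frame_e: "orthonormal_frame e"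
    by (rule orthonormal_frame_Basis)
  define \<alpha> where "\<alpha> b = a (inv_into {..<DIM('a)} e b)" for b
  have \<alpha>_e: "\<alpha> (e k) = a k" if "k < DIM('a)" for k
    using that e by (simp add: \<alpha>_def bij_betw_def inv_into_f_f)
  have \<alpha>_pos: "\<alpha> b > 0" if "b \<in> Basis" for b
  proof -
    have "inv_into {..<DIM('a)} e b \<in> {..<DIM('a)}"
      using that e by (metis bij_betw_def inv_into_into)
    then show ?thesis
      using pos by (simp add: \<alpha>_def)
  qed
  have factor: "frame_scale v a x = frame_rotation e v (diag_scale \<alpha> (frame_rotation v e x))" for x
  proof (rule frame_eqI[OF v])
    fix k
    assume k: "k < DIM('a)"
    have ek: "e k \<in> Basis"
      using e k by (auto dest: bij_betw_apply)
    show "frame_scale v a x \<bullet> v k = frame_rotation e v (diag_scale \<alpha> (frame_rotation v e x)) \<bullet> v k"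
      using k by (simp add: inner_frame_scale[OF v] inner_frame_rotation[OF v]
          inner_frame_rotation[OF frame_e] inner_diag_scale[OF ek] \<alpha>_e)
  qed
  have compact_image_diag_scale: "compact (diag_scale \<alpha> ` cball (0::'a) 1)"
    by (meson compact_cball compact_continuous_image linear_continuous_on linear_diag_scale linear_linear)
  have "frame_scale v a ` cball 0 1 = frame_rotation e v ` diag_scale \<alpha> ` frame_rotation v e ` cball 0 1"
    by (simp add: image_image factor)
  also have "\<dots> = frame_rotation e v ` diag_scale \<alpha> ` cball 0 1"
    by (simp add: frame_rotation_cball[OF v frame_e])
  finally have "measure lebesgue (frame_scale v a ` cball 0 1)
      = measure lebesgue (frame_rotation e v ` diag_scale \<alpha> ` cball 0 1)"
    by simp
  also have "\<dots> = measure lebesgue (diag_scale \<alpha> ` cball (0::'a) 1)"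
    using measure_linear_image_compact[OF linear_frame_rotation compact_image_diag_scale]
    by (simp add: volume_factor_frame_rotation[OF frame_e v])
  also have "\<dots> = volume_factor (diag_scale \<alpha>) * measure lebesgue (cball (0::'a) 1)"
    by (rule measure_linear_image_compact[OF linear_diag_scale compact_cball])
  also have "volume_factor (diag_scale \<alpha>) = (\<Prod>i<DIM('a). a i)"
    using volume_factor_diag_scale[OF \<alpha>_pos] prod.reindex_bij_betw[OF e, of \<alpha>] by (simp add: \<alpha>_e)
  finally show ?thesis .
qed

lemma frame_weighted_sum_extremal:
  fixes v :: "nat \<Rightarrow> 'a::euclidean_space"
  assumes v: "orthonormal_frame v" and i: "i < DIM('a)"
    and sum_le: "(\<Sum>k<DIM('a). a k * (z \<bullet> v k)\<^sup>2) \<le> a i * (norm z)\<^sup>2"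
    and above: "\<And>k. i < k \<Longrightarrow> k < DIM('a) \<Longrightarrow> z \<bullet> v k = 0"
    and below: "\<And>k. k < i \<Longrightarrow> a i < a k"
  shows "z = (z \<bullet> v i) *\<^sub>R v i"
proof -
  define g where "g k = (a k - a i) * (z \<bullet> v k)\<^sup>2" for k
  have g_nonneg: "g k \<ge> 0" if "k < DIM('a)" for k
    using that below[of k] above[of k] by (cases k i rule: linorder_cases) (auto simp: g_def)
  have "(\<Sum>k<DIM('a). g k) = (\<Sum>k<DIM('a). a k * (z \<bullet> v k)\<^sup>2) - a i * (norm z)\<^sup>2"
    by (simp add: g_def frame_norm_sq[OF v] algebra_simps sum_subtractf sum_distrib_left)
  with sum_le have "(\<Sum>k<DIM('a). g k) \<le> 0"
    by simp
  then have g_zero: "g k = 0" if "k < DIM('a)" for k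
    using that g_nonneg sum_nonneg_eq_0_iff[of "{..<DIM('a)}" g]
    by (metis finite_lessThan lessThan_iff order_antisym sum_nonneg)
  have "z \<bullet> v k = 0" if "k < i" for k
    using g_zero[of k] that i below[of k] by (simp add: g_def)
  then show ?thesis
    using above i
    by (intro frame_eqI[OF v]) (auto simp: orthonormal_frameD[OF v] linorder_neq_iff)
qed

section \<open>The ellipsoid with semi-axes \<open>\<lambda>, \<lambda>\<^sup>2, \<dots>, \<lambda>\<^sup>d\<close>\<close>

definition ell_gauge :: "(nat \<Rightarrow> 'a::euclidean_space) \<Rightarrow> real \<Rightarrow> 'a \<Rightarrow> real" where
  "ell_gauge u lam y = (\<Sum>i<DIM('a). (y \<bullet> u i)\<^sup>2 / (lam ^ (i + 1))\<^sup>2)"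

lemma ell_gauge_scaleR: "ell_gauge u lam (t *\<^sub>R y) = t\<^sup>2 * ell_gauge u lam y"
  by (simp add: ell_gauge_def sum_distrib_left power_mult_distrib)

lemma ell_gauge_uminus: "ell_gauge u lam (- y) = ell_gauge u lam y"
  using ell_gauge_scaleR[of u lam "-1" y] by simp

lemma ell_gauge_frame_vector:
  assumes u: "orthonormal_frame (u :: nat \<Rightarrow> 'a::euclidean_space)" and p: "p < DIM('a)"
  shows "ell_gauge u lam (u p) = 1 / (lam ^ (p + 1))\<^sup>2"
proof -
  have "ell_gauge u lam (u p) = (\<Sum>l<DIM('a). if l = p then 1 / (lam ^ (p + 1))\<^sup>2 else 0)"
    unfolding ell_gauge_def by (rule sum.cong) (use orthonormal_frameD[OF u p] in auto)
  also have "\<dots> = 1 / (lam ^ (p + 1))\<^sup>2"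
    using p by simp
  finally show ?thesis .
qed

lemma ell_gauge_half_diff_le:
  assumes "ell_gauge u lam p \<le> 1" "ell_gauge u lam q \<le> 1"
  shows "ell_gauge u lam ((1/2) *\<^sub>R (p - q)) \<le> 1"
proof -
  have "ell_gauge u lam (p - q) \<le> 2 * (ell_gauge u lam p + ell_gauge u lam q)"
    unfolding ell_gauge_def sum_distrib_left sum.distrib[symmetric] distrib_left[symmetric]
  proof (rule sum_mono)
    fix i
    have "(a - b)\<^sup>2 \<le> 2 * (a\<^sup>2 + b\<^sup>2)" for a b :: real
      using zero_le_power2[of "a + b"] by (simp add: power2_eq_square algebra_simps)
    then have "((p - q) \<bullet> u i)\<^sup>2 \<le> 2 * ((p \<bullet> u i)\<^sup>2 + (q \<bullet> u i)\<^sup>2)"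
      by (simp add: inner_diff_left)
    then show "((p - q) \<bullet> u i)\<^sup>2 / (lam ^ (i + 1))\<^sup>2
        \<le> 2 * ((p \<bullet> u i)\<^sup>2 / (lam ^ (i + 1))\<^sup>2 + (q \<bullet> u i)\<^sup>2 / (lam ^ (i + 1))\<^sup>2)"
      by (simp add: add_divide_distrib[symmetric] divide_right_mono)
  qed
  then show ?thesis
    using assms by (simp add: ell_gauge_scaleR power2_eq_square)
qed

lemma norm_sq_le_ell_gauge:
  assumes u: "orthonormal_frame (u :: nat \<Rightarrow> 'a::euclidean_space)" and lam: "1 \<le> lam"
    and zero: "\<And>l. p \<le> l \<Longrightarrow> l < DIM('a) \<Longrightarrow> y \<bullet> u l = 0"
  shows "(norm y)\<^sup>2 / (lam ^ p)\<^sup>2 \<le> ell_gauge u lam y"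
proof -
  have "(norm y)\<^sup>2 / (lam ^ p)\<^sup>2 = (\<Sum>i<DIM('a). (y \<bullet> u i)\<^sup>2 / (lam ^ p)\<^sup>2)"
    by (simp add: frame_norm_sq[OF u] sum_divide_distrib)
  also have "\<dots> \<le> ell_gauge u lam y"
    unfolding ell_gauge_def
  proof (rule sum_mono)
    fix i
    assume i: "i \<in> {..<DIM('a)}"
    show "(y \<bullet> u i)\<^sup>2 / (lam ^ p)\<^sup>2 \<le> (y \<bullet> u i)\<^sup>2 / (lam ^ (i + 1))\<^sup>2"
    proof (cases "i < p")
      case True
      then have "lam ^ (i + 1) \<le> lam ^ p"
        using lam by (intro power_increasing) auto
      then show ?thesis
        using lam by (intro divide_left_mono power_mono) auto
    next
      case False
      then show ?thesis
        using zero i by simp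
    qed
  qed
  finally show ?thesis .
qed

lemma ellipsoid_eq_frame_scale:
  assumes u: "orthonormal_frame (u :: nat \<Rightarrow> 'a::euclidean_space)" and lam: "0 < lam"
  shows "{y. ell_gauge u lam y \<le> 1} = frame_scale u (\<lambda>i. lam ^ (i + 1)) ` cball 0 1"
proof -
  have gauge: "ell_gauge u lam (frame_scale u (\<lambda>i. lam ^ (i + 1)) x) = (norm x)\<^sup>2" for x
    using lam by (simp add: ell_gauge_def inner_frame_scale[OF u] frame_norm_sq[OF u]
        power_mult_distrib)
  have inverse: "frame_scale u (\<lambda>i. lam ^ (i + 1)) (frame_scale u (\<lambda>i. 1 / lam ^ (i + 1)) y) = y" for y
    using lam by (simp add: frame_scale_frame_scale[OF u] frame_scale_id[OF u])
  show ?thesis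
  proof (intro equalityI subsetI)
    fix y
    assume "y \<in> {y. ell_gauge u lam y \<le> 1}"
    then have "norm (frame_scale u (\<lambda>i. 1 / lam ^ (i + 1)) y) \<le> 1"
      using gauge[of "frame_scale u (\<lambda>i. 1 / lam ^ (i + 1)) y"] inverse[of y]
      by (simp add: power_le_one_iff)
    then show "y \<in> frame_scale u (\<lambda>i. lam ^ (i + 1)) ` cball 0 1"
      using inverse[of y] by force
  next
    fix y
    assume "y \<in> frame_scale u (\<lambda>i. lam ^ (i + 1)) ` cball 0 1"
    then obtain x where "norm x \<le> 1" "y = frame_scale u (\<lambda>i. lam ^ (i + 1)) x"
      by auto
    moreover have "(norm x)\<^sup>2 \<le> 1 \<longleftrightarrow> norm x \<le> 1"
      by (simp add: power_le_one_iff)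
    ultimately show "y \<in> {y. ell_gauge u lam y \<le> 1}"
      using gauge[of x] by simp
  qed
qed

lemma measure_ellipsoid:
  assumes u: "orthonormal_frame (u :: nat \<Rightarrow> 'a::euclidean_space)" and lam: "0 < lam"
  shows "measure lebesgue {y. ell_gauge u lam y \<le> 1}
    = (\<Prod>i<DIM('a). lam ^ (i + 1)) * measure lebesgue (cball (0::'a) 1)"
  using lam by (simp add: ellipsoid_eq_frame_scale[OF u lam] measure_frame_scale_cball[OF u])

lemma compact_ellipsoid:
  assumes u: "orthonormal_frame (u :: nat \<Rightarrow> 'a::euclidean_space)" and lam: "0 < lam"
  shows "compact {y. ell_gauge u lam y \<le> 1}"
  unfolding ellipsoid_eq_frame_scale[OF u lam]
  by (meson compact_cball compact_continuous_image linear_continuous_on linear_frame_scale linear_linear)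

lemma measure_ellipsoid_pos:
  assumes u: "orthonormal_frame (u :: nat \<Rightarrow> 'a::euclidean_space)" and lam: "0 < lam"
  shows "0 < measure lebesgue {y. ell_gauge u lam y \<le> 1}"
  using lam content_cball_pos[of 1 "0::'a"] by (simp add: measure_ellipsoid[OF u lam] prod_pos)

lemma centered_image_in_ellipsoid:
  assumes A: "linear A" and sub: "(\<lambda>x. A x + z) ` cball 0 1 \<subseteq> {y. ell_gauge u lam y \<le> 1}"
    and x: "norm x \<le> 1"
  shows "ell_gauge u lam (A x) \<le> 1"
proof -
  have "ell_gauge u lam (A x + z) \<le> 1" "ell_gauge u lam (A (- x) + z) \<le> 1"
    using subsetD[OF sub, of "A x + z"] subsetD[OF sub, of "A (- x) + z"] x by auto
  moreover have "A x = (1/2) *\<^sub>R ((A x + z) - (A (- x) + z))"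
    by (simp add: linear_neg[OF A] scaleR_2[symmetric])
  ultimately show ?thesis
    by (metis ell_gauge_half_diff_le)
qed

section \<open>Spectral theorem for self-adjoint maps\<close>

lemma linear_coeff_zero_if_quadratic_nonpos:
  fixes a b :: real
  assumes "\<And>t. 2 * t * a + t\<^sup>2 * b \<le> 0" "b \<le> 0"
  shows "a = 0"
proof (rule ccontr)
  assume a: "a \<noteq> 0"
  define t where "t = a / (1 - b)"
  have pos: "1 - b > 0"
    using assms(2) by simp
  have "2 * t * a + t\<^sup>2 * b = a\<^sup>2 * (2 - b) / (1 - b)\<^sup>2"
    using pos unfolding t_def power2_eq_square by (simp add: divide_simps) (simp add: algebra_simps)
  moreover have "a\<^sup>2 * (2 - b) / (1 - b)\<^sup>2 > 0"
    using a assms(2) pos by (intro divide_pos_pos mult_pos_pos) auto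
  ultimately show False
    using assms(1)[of t] by linarith
qed

lemma rayleigh_quotient_max:
  fixes S :: "'a::euclidean_space \<Rightarrow> 'a"
  assumes lin: "linear S" and V: "subspace V" "V \<noteq> {0}"
  obtains x where "x \<in> V" "norm x = 1" "\<And>y. y \<in> V \<Longrightarrow> y \<bullet> S y \<le> (x \<bullet> S x) * (y \<bullet> y)"
proof -
  define q where "q x = x \<bullet> S x" for x
  let ?K = "V \<inter> sphere 0 1"
  obtain y0 where y0: "y0 \<in> V" "y0 \<noteq> 0"
    using V subspace_0 by blast
  then have "y0 /\<^sub>R norm y0 \<in> ?K"
    using V by (auto simp: subspace_scale)
  moreover have "compact ?K"
    by (metis Int_commute closed_subspace V(1) compact_Int_closed compact_sphere)
  moreover have "continuous_on ?K q"
    unfolding q_def using lin linear_linear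
    by (intro continuous_intros) (auto intro: linear_continuous_on)
  ultimately obtain x where xK: "x \<in> ?K" and x_max: "\<And>y. y \<in> ?K \<Longrightarrow> q y \<le> q x"
    using continuous_attains_sup[of ?K q] by blast
  have "q y \<le> q x * (y \<bullet> y)" if "y \<in> V" for y
  proof (cases "y = 0")
    case False
    then have "q (y /\<^sub>R norm y) \<le> q x"
      using that V x_max by (auto simp: subspace_scale)
    moreover have "q (y /\<^sub>R norm y) = q y / (norm y)\<^sup>2"
      by (simp add: q_def linear_scale[OF lin] power2_eq_square divide_inverse)
    ultimately have "q y / (norm y)\<^sup>2 \<le> q x"
      by simp
    then show ?thesis
      using False by (simp add: field_simps power2_norm_eq_inner)
  qed (simp add: q_def linear_0[OF lin])
  then show ?thesis
    using that xK by (auto simp: q_def)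
qed

text \<open>The first variation of the Rayleigh quotient vanishes at a maximiser.\<close>

lemma self_adjoint_rayleigh_max_eigenvector:
  fixes S :: "'a::euclidean_space \<Rightarrow> 'a"
  assumes lin: "linear S" and adj: "\<And>x y. S x \<bullet> y = x \<bullet> S y"
    and V: "subspace V" "S ` V \<subseteq> V" and x: "x \<in> V" "norm x = 1"
    and max: "\<And>y. y \<in> V \<Longrightarrow> y \<bullet> S y \<le> (x \<bullet> S x) * (y \<bullet> y)"
  shows "S x = (x \<bullet> S x) *\<^sub>R x"
proof -
  define \<mu> where "\<mu> = x \<bullet> S x"
  have xx: "x \<bullet> x = 1"
    using x by (simp add: norm_eq_1)
  have orth: "y \<bullet> S x = 0" if y: "y \<in> V" "y \<bullet> x = 0" for y
  proof (rule linear_coeff_zero_if_quadratic_nonpos)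
    fix t
    have "x + t *\<^sub>R y \<in> V"
      using x y V by (simp add: subspace_add subspace_scale)
    moreover have "(x + t *\<^sub>R y) \<bullet> S (x + t *\<^sub>R y) = \<mu> + 2 * t * (y \<bullet> S x) + t\<^sup>2 * (y \<bullet> S y)"
      using adj[of x y] adj[of y x]
      by (simp add: \<mu>_def linear_add[OF lin] linear_scale[OF lin] inner_add_left
          inner_add_right power2_eq_square algebra_simps inner_commute)
    moreover have "(x + t *\<^sub>R y) \<bullet> (x + t *\<^sub>R y) = 1 + t\<^sup>2 * (y \<bullet> y)"
      using y xx by (simp add: inner_add_left inner_add_right power2_eq_square inner_commute)
    ultimately show "2 * t * (y \<bullet> S x) + t\<^sup>2 * (y \<bullet> S y - \<mu> * (y \<bullet> y)) \<le> 0"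
      using max unfolding \<mu>_def by (force simp: algebra_simps)
  qed (use max y in \<open>simp add: \<mu>_def\<close>)
  define r where "r = S x - \<mu> *\<^sub>R x"
  have "r \<in> V"
    using V x by (simp add: r_def subspace_diff subspace_scale image_subset_iff)
  moreover have "r \<bullet> x = 0"
    using xx inner_commute[of "S x" x] by (simp add: r_def inner_diff_left \<mu>_def)
  ultimately have "r \<bullet> r = 0"
    using orth by (simp add: r_def inner_diff_right)
  then show ?thesis
    by (simp add: r_def \<mu>_def)
qed

lemma self_adjoint_eigenbasis_subspace:
  fixes S :: "'a::euclidean_space \<Rightarrow> 'a"
  assumes lin: "linear S" and adj: "\<And>x y. S x \<bullet> y = x \<bullet> S y"
  shows "subspace V \<Longrightarrow> S ` V \<subseteq> V \<Longrightarrow> dim V = d \<Longrightarrow>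
    \<exists>w \<mu>. (\<forall>i<d. \<forall>j<d. w i \<bullet> w j = (if i = j then 1 else 0)) \<and>
      (\<forall>i<d. w i \<in> V \<and> S (w i) = \<mu> i *\<^sub>R w i) \<and> (\<forall>i j. i \<le> j \<longrightarrow> j < d \<longrightarrow> \<mu> j \<le> \<mu> i)"
proof (induction d arbitrary: V)
  case (Suc d)
  then have "V \<noteq> {0}"
    by (metis dim_singleton nat.distinct(1))
  then obtain x0 where x0V: "x0 \<in> V" "norm x0 = 1"
    and top: "\<And>y. y \<in> V \<Longrightarrow> y \<bullet> S y \<le> (x0 \<bullet> S x0) * (y \<bullet> y)"
    using rayleigh_quotient_max[OF lin Suc.prems(1)] by blast
  define \<mu>0 where "\<mu>0 = x0 \<bullet> S x0"
  have x0: "x0 \<in> V" "norm x0 = 1" "S x0 = \<mu>0 *\<^sub>R x0"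
    using x0V self_adjoint_rayleigh_max_eigenvector[OF lin adj Suc.prems(1,2) x0V top]
    by (simp_all add: \<mu>0_def)
  note top = top[folded \<mu>0_def]
  define V' where "V' = {y \<in> V. \<forall>x\<in>span {x0}. orthogonal x y}"
  have V'_iff: "y \<in> V' \<longleftrightarrow> y \<in> V \<and> y \<bullet> x0 = 0" for y
    by (auto simp: V'_def span_singleton orthogonal_def inner_commute)
  have "subspace V'"
    unfolding subspace_def using Suc.prems(1)
    by (auto simp: V'_iff subspace_add subspace_scale inner_add_left subspace_0)
  moreover have "S ` V' \<subseteq> V'"
    using Suc.prems(2) x0 adj by (auto simp: V'_iff image_subset_iff)
  moreover have "dim V' + dim (span {x0}) = dim V"
    unfolding V'_def
    by (rule dim_subspace_orthogonal_to_vectors) (use Suc.prems x0 in \<open>auto simp: span_minimal\<close>)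
  then have "dim V' = d"
    using Suc.prems(3) x0 by (auto simp: dim_span dim_singleton split: if_splits)
  ultimately obtain w' \<mu>' where on': "\<forall>i<d. \<forall>j<d. w' i \<bullet> w' j = (if i = j then 1 else 0)"
    and ev': "\<forall>i<d. w' i \<in> V' \<and> S (w' i) = \<mu>' i *\<^sub>R w' i"
    and so': "\<forall>i j. i \<le> j \<longrightarrow> j < d \<longrightarrow> \<mu>' j \<le> \<mu>' i"
    using Suc.IH by blast
  define w where "w i = (if i = 0 then x0 else w' (i - 1))" for i
  define \<mu> where "\<mu> i = (if i = 0 then \<mu>0 else \<mu>' (i - 1))" for i
  have "\<mu>' i \<le> \<mu>0" if "i < d" for i
    using top[of "w' i"] ev' on' that by (auto simp: V'_iff)
  then have "\<forall>i j. i \<le> j \<longrightarrow> j < Suc d \<longrightarrow> \<mu> j \<le> \<mu> i"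
    using so' by (auto simp: \<mu>_def)
  moreover have "\<forall>i<Suc d. \<forall>j<Suc d. w i \<bullet> w j = (if i = j then 1 else 0)"
  proof (intro allI impI)
    fix i j
    assume "i < Suc d" "j < Suc d"
    then show "w i \<bullet> w j = (if i = j then 1 else 0)"
      using on' ev' x0 by (cases i; cases j) (auto simp: w_def V'_iff inner_commute norm_eq_1)
  qed
  moreover have "\<forall>i<Suc d. w i \<in> V \<and> S (w i) = \<mu> i *\<^sub>R w i"
    using ev' x0 by (auto simp: w_def \<mu>_def V'_iff)
  ultimately show ?case
    by blast
qed auto

lemma self_adjoint_eigenbasis:
  fixes S :: "'a::euclidean_space \<Rightarrow> 'a"
  assumes "linear S" "\<And>x y. S x \<bullet> y = x \<bullet> S y"
  obtains w \<mu> where "orthonormal_frame w" "\<And>i. i < DIM('a) \<Longrightarrow> S (w i) = \<mu> i *\<^sub>R w i"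
    "\<And>i j. i \<le> j \<Longrightarrow> j < DIM('a) \<Longrightarrow> \<mu> j \<le> \<mu> i"
  using self_adjoint_eigenbasis_subspace[OF assms subspace_UNIV, of "DIM('a)"]
  by (auto simp: orthonormal_frame_def dim_UNIV)

section \<open>Orthogonal complements\<close>

lemma dim_orthogonal_comp:
  fixes F :: "'a::euclidean_space set"
  assumes "subspace F"
  shows "dim (F\<^sup>\<bottom>) + dim F = DIM('a)"
proof -
  have "{y \<in> UNIV. \<forall>x\<in>F. orthogonal x y} = F\<^sup>\<bottom>"
    by (auto simp: orthogonal_comp_def)
  then show ?thesis
    using dim_subspace_orthogonal_to_vectors[of F UNIV] assms by (simp add: dim_UNIV)
qed

lemma orthogonal_comp_decomp:
  fixes F :: "'a::euclidean_space set"
  assumes "subspace F"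
  obtains f h where "f \<in> F" "h \<in> F\<^sup>\<bottom>" "y = f + h"
  using subspace_sum_orthogonal_comp[OF assms] by (metis UNIV_I set_plus_elim)

lemma subspace_inter_nonzero:
  fixes P Q :: "'a::euclidean_space set"
  assumes "subspace P" "subspace Q" "DIM('a) < dim P + dim Q"
  obtains x where "x \<noteq> 0" "x \<in> P" "x \<in> Q"
proof -
  have "dim {x + y |x y. x \<in> P \<and> y \<in> Q} + dim (P \<inter> Q) = dim P + dim Q"
    by (rule dim_sums_Int[OF assms(1,2)])
  moreover have "dim {x + y |x y. x \<in> P \<and> y \<in> Q} \<le> DIM('a)"
    by (rule dim_subset_UNIV)
  ultimately have "dim (P \<inter> Q) \<noteq> 0"
    using assms(3) by linarith
  then have "\<not> P \<inter> Q \<subseteq> {0}"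
    using dim_subset[of "P \<inter> Q" "{0}"] by (auto simp: dim_singleton)
  then show ?thesis
    using that by blast
qed

lemma inner_orthogonal_comp: "h \<in> F\<^sup>\<bottom> \<Longrightarrow> f \<in> F \<Longrightarrow> h \<bullet> f = 0"
  by (auto simp: orthogonal_comp_def orthogonal_def inner_commute)

lemma norm_le_norm_add_orthogonal:
  fixes f h :: "'a::real_inner"
  assumes "orthogonal f h"
  shows "norm h \<le> norm (f + h)"
proof -
  have "(norm h)\<^sup>2 \<le> (norm (f + h))\<^sup>2"
    using norm_add_Pythagorean[OF assms] by simp
  then show ?thesis
    by (rule power2_le_imp_le) simp
qed

lemma orth_proj_add_orthogonal_comp:
  fixes F :: "'a::euclidean_space set"
  assumes f: "f \<in> F" and h: "h \<in> F\<^sup>\<bottom>"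
  shows "orth_proj (F\<^sup>\<bottom>) (f + h) = h"
  unfolding orth_proj_def
proof (rule the_equality)
  have "f \<bullet> z = 0" if "z \<in> F\<^sup>\<bottom>" for z
    using inner_orthogonal_comp[OF that f] by (simp add: inner_commute)
  then show "h \<in> F\<^sup>\<bottom> \<and> (\<forall>z\<in>F\<^sup>\<bottom>. (f + h - h) \<bullet> z = 0)"
    using h by simp
next
  fix y
  assume y: "y \<in> F\<^sup>\<bottom> \<and> (\<forall>z\<in>F\<^sup>\<bottom>. (f + h - y) \<bullet> z = 0)"
  have hy: "h - y \<in> F\<^sup>\<bottom>"
    using y h by (simp add: subspace_diff subspace_orthogonal_comp)
  have "(f + h - y) \<bullet> (h - y) = 0"
    using y hy by blast
  moreover have "f \<bullet> (h - y) = 0"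
    using inner_orthogonal_comp[OF hy f] by (simp add: inner_commute)
  ultimately have "(h - y) \<bullet> (h - y) = 0"
    by (simp add: inner_add_left inner_diff_left algebra_simps)
  then show "y = h"
    by simp
qed

section \<open>Ellipsoids of revolution inscribed in E\<close>

lemma perp_vector_of_norm_abs_c:
  fixes F :: "'a::euclidean_space set"
  assumes nontrivial: "F\<^sup>\<bottom> \<noteq> {0}" and A_perp: "\<And>x. x \<in> F\<^sup>\<bottom> \<Longrightarrow> A x = c *\<^sub>R x"
    and inside: "\<And>x. norm x \<le> 1 \<Longrightarrow> ell_gauge u lam (A x) \<le> 1"
  obtains y where "ell_gauge u lam y \<le> 1" "y \<in> F\<^sup>\<bottom>" "\<bar>c\<bar> = norm y"
proof -
  obtain g where g: "g \<in> F\<^sup>\<bottom>" "g \<noteq> 0"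
    using nontrivial subspace_0[OF subspace_orthogonal_comp] by blast
  define g' where "g' = g /\<^sub>R norm g"
  have "g' \<in> F\<^sup>\<bottom>" "norm g' = 1"
    using g by (simp_all add: g'_def subspace_scale subspace_orthogonal_comp)
  then show ?thesis
    using that[of "A g'"] inside[of g'] A_perp[of g'] by (simp add: subspace_scale subspace_orthogonal_comp)
qed

locale inscribed_revolution =
  fixes u :: "nat \<Rightarrow> 'a::euclidean_space" and lam :: real
    and A :: "'a \<Rightarrow> 'a" and F :: "'a set" and c :: real
  assumes frame_u: "orthonormal_frame u" and lam_ge_1: "1 \<le> lam"
    and linear_A: "linear A" and inj_A: "inj A"
    and subspace_F: "subspace F" and A_F: "A ` F \<subseteq> F"
    and A_perp: "\<And>x. x \<in> F\<^sup>\<bottom> \<Longrightarrow> A x = c *\<^sub>R x"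
    and codim_F: "2 \<le> dim (F\<^sup>\<bottom>)"
    and A_ball_inside: "\<And>x. norm x \<le> 1 \<Longrightarrow> ell_gauge u lam (A x) \<le> 1"
begin

lemma inner_adjoint_A: "x \<bullet> adjoint A y = A x \<bullet> y"
  by (rule adjoint_works[OF linear_A])

lemma adjoint_A_perp:
  assumes g: "g \<in> F\<^sup>\<bottom>"
  shows "adjoint A g = c *\<^sub>R g"
proof -
  have "y \<bullet> adjoint A g = y \<bullet> c *\<^sub>R g" for y
  proof -
    obtain f h where f: "f \<in> F" and h: "h \<in> F\<^sup>\<bottom>" and y: "y = f + h"
      using orthogonal_comp_decomp[OF subspace_F] by blast
    have "A f \<in> F"
      using A_F f by blast
    then have "y \<bullet> adjoint A g = A f \<bullet> g + c * (h \<bullet> g)"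
      by (simp add: inner_adjoint_A y linear_add[OF linear_A] A_perp[OF h] inner_add_left)
    also have "A f \<bullet> g = 0"
      using inner_orthogonal_comp[OF g \<open>A f \<in> F\<close>] by (simp add: inner_commute)
    finally have "y \<bullet> adjoint A g = c * (h \<bullet> g)"
      by simp
    also have "f \<bullet> g = 0"
      using inner_orthogonal_comp[OF g f] by (simp add: inner_commute)
    then have "c * (h \<bullet> g) = y \<bullet> c *\<^sub>R g"
      by (simp add: y inner_add_left)
    finally show ?thesis .
  qed
  then show ?thesis
    using vector_eq_ldot by blast
qed

lemma adjoint_A_F:
  assumes f: "f \<in> F"
  shows "adjoint A f \<in> F"
proof -
  have "h \<bullet> adjoint A f = 0" if h: "h \<in> F\<^sup>\<bottom>" for h
    using inner_orthogonal_comp[OF h f] by (simp add: inner_adjoint_A A_perp[OF h])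
  then have "adjoint A f \<in> F\<^sup>\<bottom>\<^sup>\<bottom>"
    by (auto simp: orthogonal_comp_def orthogonal_def)
  then show ?thesis
    using orthogonal_comp_self[OF subspace_F] by simp
qed

lemma ell_gauge_A_le: "ell_gauge u lam (A x) \<le> (norm x)\<^sup>2"
proof (cases "x = 0")
  case True
  then show ?thesis
    using A_ball_inside[of 0] by (simp add: linear_0[OF linear_A] ell_gauge_def)
next
  case False
  have "A (x /\<^sub>R norm x) = (1 / norm x) *\<^sub>R A x"
    by (simp add: linear_scale[OF linear_A] divide_inverse)
  then have "(1 / norm x)\<^sup>2 * ell_gauge u lam (A x) \<le> 1"
    using A_ball_inside[of "x /\<^sub>R norm x"] False by (simp add: ell_gauge_scaleR)
  then show ?thesis
    using False by (simp add: field_simps power2_eq_square)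
qed

lemma norm_adjoint_A_frame_le:
  assumes l: "l < DIM('a)"
  shows "norm (adjoint A (u l)) \<le> lam ^ (l + 1)"
proof (cases "adjoint A (u l) = 0")
  case True
  then show ?thesis
    using lam_ge_1 by simp
next
  case False
  define a where "a = adjoint A (u l)"
  define x where "x = a /\<^sub>R norm a"
  have a0: "a \<noteq> 0"
    using False by (simp add: a_def)
  have "A x \<bullet> u l = x \<bullet> a"
    by (simp add: a_def inner_adjoint_A)
  also have "\<dots> = norm a"
    using a0 by (simp add: x_def power2_norm_eq_inner[symmetric] power2_eq_square)
  finally have unit: "A x \<bullet> u l = norm a" .
  have "(A x \<bullet> u l)\<^sup>2 / (lam ^ (l + 1))\<^sup>2 \<le> ell_gauge u lam (A x)"
    unfolding ell_gauge_def using l by (intro member_le_sum) auto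
  moreover have "ell_gauge u lam (A x) \<le> 1"
    by (rule A_ball_inside) (use a0 in \<open>simp add: x_def\<close>)
  ultimately have "(norm a)\<^sup>2 / (lam ^ (l + 1))\<^sup>2 \<le> 1"
    unfolding unit by linarith
  then have "(norm a)\<^sup>2 \<le> (lam ^ (l + 1))\<^sup>2"
    using lam_ge_1 by (simp add: divide_le_eq)
  then show ?thesis
    unfolding a_def by (rule power2_le_imp_le) (use lam_ge_1 in simp)
qed

end

text \<open>The w i are right singular vectors of A and the \<open>\<mu> i\<close> the squared singular values,
  in decreasing order.\<close>

locale singular_decomposition = inscribed_revolution u lam A F c
  for u :: "nat \<Rightarrow> 'a::euclidean_space" and lam A F c +
  fixes w :: "nat \<Rightarrow> 'a" and \<mu> :: "nat \<Rightarrow> real"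
  assumes frame_w: "orthonormal_frame w"
    and eigen_w: "\<And>i. i < DIM('a) \<Longrightarrow> adjoint A (A (w i)) = \<mu> i *\<^sub>R w i"
    and eigval_antimono: "\<And>i j. i \<le> j \<Longrightarrow> j < DIM('a) \<Longrightarrow> \<mu> j \<le> \<mu> i"
begin

lemma inner_A_A_w: "k < DIM('a) \<Longrightarrow> A x \<bullet> A (w k) = \<mu> k * (x \<bullet> w k)"
  by (simp add: eigen_w flip: inner_adjoint_A)

lemma norm_A_sq: "(norm (A x))\<^sup>2 = (\<Sum>i<DIM('a). \<mu> i * (x \<bullet> w i)\<^sup>2)"
proof -
  have "A x = (\<Sum>i<DIM('a). (x \<bullet> w i) *\<^sub>R A (w i))"
    by (subst frame_expansion[OF frame_w, of x]) (simp add: linear_sum[OF linear_A] linear_scale[OF linear_A])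
  then have "(norm (A x))\<^sup>2 = (\<Sum>i<DIM('a). (x \<bullet> w i) * (A x \<bullet> A (w i)))"
    by (metis (no_types, lifting) power2_norm_eq_inner inner_scaleR_right inner_sum_right sum.cong)
  also have "\<dots> = (\<Sum>i<DIM('a). \<mu> i * (x \<bullet> w i)\<^sup>2)"
    by (rule sum.cong) (auto simp: inner_A_A_w power2_eq_square)
  finally show ?thesis .
qed

lemma eigval_pos: "i < DIM('a) \<Longrightarrow> 0 < \<mu> i"
  using inner_A_A_w[of i "w i"] inj_A linear_0[OF linear_A] norm_frame_vector[OF frame_w, of i]
  by (metis inner_gt_zero_iff inj_eq mult.right_neutral norm_eq_1 norm_zero zero_neq_one)

text \<open>Courant--Fischer: a nonzero x in the span of the k + 1 leading singular directions whose
  image is orthogonal to the k longest axes of E satisfies \<open>\<sigma> k \<bar>x\<bar> \<le> \<bar>A x\<bar> \<le> \<lambda>\<^bsup>d-k\<^esup> \<bar>x\<bar>\<close>.\<close>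

lemma courant_fischer_vector:
  assumes k: "k < DIM('a)"
  obtains x where "x \<noteq> 0" "\<And>i. k < i \<Longrightarrow> i < DIM('a) \<Longrightarrow> x \<bullet> w i = 0"
    "\<And>l. DIM('a) - k \<le> l \<Longrightarrow> l < DIM('a) \<Longrightarrow> A x \<bullet> u l = 0"
proof -
  define P where "P = span (w ` {..k})"
  define R where "R = span (adjoint A ` u ` {DIM('a) - k..<DIM('a)})"
  define Q where "Q = {y \<in> UNIV. \<forall>x\<in>R. orthogonal x y}"
  have "dim R \<le> card (adjoint A ` u ` {DIM('a) - k..<DIM('a)})"
    unfolding R_def dim_span by (rule dim_le_card') simp
  also have "\<dots> \<le> card {DIM('a) - k..<DIM('a)}"
    by (intro order_trans[OF card_image_le card_image_le]) auto
  finally have "dim R \<le> k"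
    using k by simp
  moreover have "dim P = Suc k"
    unfolding P_def using k by (subst dim_span_frame[OF frame_w]) auto
  moreover have "dim Q + dim R = DIM('a)"
    unfolding Q_def using dim_subspace_orthogonal_to_vectors[of R UNIV] by (simp add: R_def dim_UNIV)
  moreover have "subspace Q"
    unfolding Q_def subspace_def orthogonal_def by (auto simp: inner_add_right)
  ultimately obtain x where x0: "x \<noteq> 0" and xP: "x \<in> P" and xQ: "x \<in> Q"
    using subspace_inter_nonzero[of P Q] unfolding P_def by force
  have "A x \<bullet> u l = 0" if "DIM('a) - k \<le> l" "l < DIM('a)" for l
  proof -
    have "adjoint A (u l) \<in> R"
      unfolding R_def using that by (intro span_base) auto
    then have "x \<bullet> adjoint A (u l) = 0"
      using xQ by (auto simp: Q_def orthogonal_def inner_commute)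
    then show ?thesis
      by (simp add: inner_adjoint_A)
  qed
  moreover have "x \<bullet> w i = 0" if "k < i" "i < DIM('a)" for i
  proof -
    have "orthogonal (w i) x"
      using xP unfolding P_def
      by (rule orthogonal_to_span) (use that k in \<open>auto simp: orthogonal_def orthonormal_frameD[OF frame_w]\<close>)
    then show ?thesis
      by (simp add: orthogonal_def inner_commute)
  qed
  ultimately show ?thesis
    using that x0 by blast
qed

lemma eigval_le:
  assumes k: "k < DIM('a)"
  shows "\<mu> k \<le> (lam ^ (DIM('a) - k))\<^sup>2"
proof -
  obtain x where x0: "x \<noteq> 0" and x_low: "\<And>i. k < i \<Longrightarrow> i < DIM('a) \<Longrightarrow> x \<bullet> w i = 0"
    and Ax_top: "\<And>l. DIM('a) - k \<le> l \<Longrightarrow> l < DIM('a) \<Longrightarrow> A x \<bullet> u l = 0"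
    using courant_fischer_vector[OF k] by blast
  have "\<mu> k * (norm x)\<^sup>2 = (\<Sum>i<DIM('a). \<mu> k * (x \<bullet> w i)\<^sup>2)"
    by (simp add: frame_norm_sq[OF frame_w] sum_distrib_left)
  also have "\<dots> \<le> (\<Sum>i<DIM('a). \<mu> i * (x \<bullet> w i)\<^sup>2)"
  proof (rule sum_mono)
    fix i
    assume "i \<in> {..<DIM('a)}"
    then show "\<mu> k * (x \<bullet> w i)\<^sup>2 \<le> \<mu> i * (x \<bullet> w i)\<^sup>2"
      using eigval_antimono[of i k] x_low[of i] k by (cases "i \<le> k") (auto intro: mult_right_mono)
  qed
  also have "\<dots> = (lam ^ (DIM('a) - k))\<^sup>2 * ((norm (A x))\<^sup>2 / (lam ^ (DIM('a) - k))\<^sup>2)"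
    using lam_ge_1 by (simp add: norm_A_sq)
  also have "\<dots> \<le> (lam ^ (DIM('a) - k))\<^sup>2 * ell_gauge u lam (A x)"
    by (intro mult_left_mono norm_sq_le_ell_gauge[OF frame_u lam_ge_1]) (use Ax_top in auto)
  also have "\<dots> \<le> (lam ^ (DIM('a) - k))\<^sup>2 * (norm x)\<^sup>2"
    by (intro mult_left_mono ell_gauge_A_le) simp
  finally show ?thesis
    using x0 by simp
qed

lemma eigvec_in_F:
  assumes i: "i < DIM('a)" and ne: "\<mu> i \<noteq> c\<^sup>2"
  shows "w i \<in> F"
proof -
  obtain f h where f: "f \<in> F" and h: "h \<in> F\<^sup>\<bottom>" and wi: "w i = f + h"
    using orthogonal_comp_decomp[OF subspace_F] by blast
  have "adjoint A (A h) = c\<^sup>2 *\<^sub>R h"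
    using A_perp[OF h] adjoint_A_perp[OF h] h subspace_orthogonal_comp
    by (simp add: linear_scale[OF adjoint_linear[OF linear_A]] power2_eq_square subspace_scale)
  then have "adjoint A (A f) - \<mu> i *\<^sub>R f = (\<mu> i - c\<^sup>2) *\<^sub>R h"
    using eigen_w[OF i]
    by (simp add: wi linear_add[OF linear_A] linear_add[OF adjoint_linear[OF linear_A]] algebra_simps)
  moreover have "adjoint A (A f) - \<mu> i *\<^sub>R f \<in> F"
    using adjoint_A_F A_F f subspace_F by (auto simp: subspace_diff subspace_scale)
  moreover have "(\<mu> i - c\<^sup>2) *\<^sub>R h \<in> F\<^sup>\<bottom>"
    using h by (simp add: subspace_scale subspace_orthogonal_comp)
  ultimately have "(\<mu> i - c\<^sup>2) *\<^sub>R h = 0"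
    using orthogonal_Int_0[OF subspace_F] by (metis IntI singletonD)
  then show ?thesis
    using ne wi f by simp
qed

definition J :: "nat set" where
  "J = {i. i < DIM('a) \<and> \<mu> i = c\<^sup>2}"

lemma J_subset: "J \<subseteq> {..<DIM('a)}"
  by (auto simp: J_def)

lemma finite_J: "finite J"
  using J_subset finite_subset by blast

lemma perp_subset_span_J: "F\<^sup>\<bottom> \<subseteq> span (w ` J)"
proof
  fix g
  assume g: "g \<in> F\<^sup>\<bottom>"
  have "(g \<bullet> w i) *\<^sub>R w i \<in> span (w ` J)" if "i < DIM('a)" for i
  proof (cases "i \<in> J")
    case False
    then have "g \<bullet> w i = 0"
      using that inner_orthogonal_comp[OF g eigvec_in_F] by (auto simp: J_def)
    then show ?thesis
      by (simp add: span_zero)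
  qed (auto intro: span_scale span_base)
  then have "(\<Sum>i<DIM('a). (g \<bullet> w i) *\<^sub>R w i) \<in> span (w ` J)"
    by (intro span_sum) auto
  then show "g \<in> span (w ` J)"
    by (simp flip: frame_expansion[OF frame_w])
qed

lemma dim_perp_le_card_J: "dim (F\<^sup>\<bottom>) \<le> card J"
  using dim_subset[OF perp_subset_span_J] dim_span_frame[OF frame_w J_subset] by simp

lemma J_interval: "a \<in> J \<Longrightarrow> b \<in> J \<Longrightarrow> a \<le> k \<Longrightarrow> k \<le> b \<Longrightarrow> k \<in> J"
  using eigval_antimono[of a k] eigval_antimono[of k b] by (auto simp: J_def)

definition jmin :: nat where
  "jmin = Min J"

definition jmax :: nat where
  "jmax = Max J"

lemma card_J_ge_2: "2 \<le> card J"
  using codim_F dim_perp_le_card_J by linarith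

lemma J_nonempty: "J \<noteq> {}"
  using card_J_ge_2 by auto

lemma jmin_in_J: "jmin \<in> J" and jmax_in_J: "jmax \<in> J"
  using J_nonempty finite_J by (auto simp: jmin_def jmax_def)

lemma J_eq: "J = {jmin..jmax}"
proof
  show "J \<subseteq> {jmin..jmax}"
    using finite_J by (auto simp: jmin_def jmax_def)
  show "{jmin..jmax} \<subseteq> J"
    using J_interval[OF jmin_in_J jmax_in_J] by auto
qed

lemma jmax_less: "jmax < DIM('a)"
  using jmax_in_J by (simp add: J_def)

lemma card_J: "card J = Suc jmax - jmin"
  by (simp add: J_eq)

lemma jmin_less_jmax: "jmin < jmax"
  using card_J card_J_ge_2 by linarith

definition \<sigma> :: "nat \<Rightarrow> real" where
  "\<sigma> i = sqrt (\<mu> i)"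

definition v :: "nat \<Rightarrow> 'a" where
  "v i = (1 / \<sigma> i) *\<^sub>R A (w i)"

lemma sigma_pos: "i < DIM('a) \<Longrightarrow> 0 < \<sigma> i"
  using eigval_pos by (simp add: \<sigma>_def)

lemma sigma_sq: "i < DIM('a) \<Longrightarrow> (\<sigma> i)\<^sup>2 = \<mu> i"
  using eigval_pos by (simp add: \<sigma>_def less_imp_le)

lemma sigma_J: "i \<in> J \<Longrightarrow> \<sigma> i = \<bar>c\<bar>"
  by (simp add: J_def \<sigma>_def)

lemma A_w: "i < DIM('a) \<Longrightarrow> A (w i) = \<sigma> i *\<^sub>R v i"
  using sigma_pos[of i] by (simp add: v_def)

lemma frame_v: "orthonormal_frame v"
  unfolding orthonormal_frame_def
proof (intro allI impI)
  fix i j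
  assume i: "i < DIM('a)" and j: "j < DIM('a)"
  show "v i \<bullet> v j = (if i = j then 1 else 0)"
    using inner_A_A_w[OF j, of "w i"] sigma_sq[OF i] sigma_pos[OF i] sigma_pos[OF j]
    by (auto simp: v_def orthonormal_frameD[OF frame_w i j] power2_eq_square)
qed

lemma inner_A_v:
  assumes k: "k < DIM('a)"
  shows "A x \<bullet> v k = \<sigma> k * (x \<bullet> w k)"
proof -
  have "A x \<bullet> v k = (\<sigma> k)\<^sup>2 * (x \<bullet> w k) / \<sigma> k"
    using inner_A_A_w[OF k, of x] sigma_sq[OF k] by (simp add: v_def)
  also have "\<dots> = \<sigma> k * (x \<bullet> w k)"
    using sigma_pos[OF k] by (simp add: power2_eq_square)
  finally show ?thesis .
qed

lemma measure_A_ball: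
  "measure lebesgue (A ` cball 0 1) = (\<Prod>i<DIM('a). \<sigma> i) * measure lebesgue (cball (0::'a) 1)"
proof -
  have "A x = frame_scale v \<sigma> (frame_rotation w v x)" for x
    by (rule frame_eqI[OF frame_v])
      (simp add: inner_A_v inner_frame_scale[OF frame_v] inner_frame_rotation[OF frame_v])
  then have "A ` cball 0 1 = frame_scale v \<sigma> ` frame_rotation w v ` cball 0 1"
    by (simp add: image_image)
  then show ?thesis
    using measure_frame_scale_cball[OF frame_v sigma_pos]
    by (simp add: frame_rotation_cball[OF frame_w frame_v])
qed

lemma sigma_le: "i < DIM('a) \<Longrightarrow> \<sigma> i \<le> lam ^ (DIM('a) - i)"
  using real_sqrt_le_mono[OF eigval_le] lam_ge_1 by (simp add: \<sigma>_def)

lemma abs_c_le: "\<bar>c\<bar> \<le> lam ^ (DIM('a) - jmax)"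
  using sigma_le[OF jmax_less] sigma_J[OF jmax_in_J] by simp

text \<open>The Courant--Fischer bound for \<open>\<sigma> i\<close>, improved on J, where \<open>\<sigma>\<close> is constant, to its
  value at jmax.\<close>

definition sigma_bound :: "nat \<Rightarrow> real" where
  "sigma_bound i = (if i \<in> J then lam ^ (DIM('a) - jmax) else lam ^ (DIM('a) - i))"

lemma sigma_le_sigma_bound: "i < DIM('a) \<Longrightarrow> \<sigma> i \<le> sigma_bound i"
  using sigma_le abs_c_le sigma_J by (auto simp: sigma_bound_def)

lemma sigma_bound_pos: "0 < sigma_bound i"
  using lam_ge_1 by (simp add: sigma_bound_def)

definition T :: nat where
  "T = (\<Sum>i\<in>J. jmax - i)"

lemma T_eq: "T = (\<Sum>l<card J. l)"
  unfolding T_def card_J J_eq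
  by (rule sum.reindex_bij_witness[where i="\<lambda>l. jmax - l" and j="\<lambda>i. jmax - i"])
    (use jmin_less_jmax in auto)

lemma T_pos: "1 \<le> T"
proof -
  have "jmax - jmin \<le> T"
    unfolding T_def using finite_J jmin_in_J by (metis member_le_sum zero_le)
  then show ?thesis
    using jmin_less_jmax by linarith
qed

lemma prod_sigma_bound:
  "(\<Prod>i<DIM('a). sigma_bound i) * lam ^ T = (\<Prod>i<DIM('a). lam ^ (DIM('a) - i))"
proof -
  have "(\<Prod>i<DIM('a). lam ^ (DIM('a) - i))
      = (\<Prod>i<DIM('a). sigma_bound i * (if i \<in> J then lam ^ (jmax - i) else 1))"
  proof (rule prod.cong)
    fix i
    assume "i \<in> {..<DIM('a)}"
    show "lam ^ (DIM('a) - i) = sigma_bound i * (if i \<in> J then lam ^ (jmax - i) else 1)"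
    proof (cases "i \<in> J")
      case True
      then have "DIM('a) - i = (DIM('a) - jmax) + (jmax - i)"
        using J_eq jmax_less by auto
      then show ?thesis
        using True by (simp add: sigma_bound_def power_add)
    qed (simp add: sigma_bound_def)
  qed simp
  also have "\<dots> = (\<Prod>i<DIM('a). sigma_bound i) * (\<Prod>i\<in>J. lam ^ (jmax - i))"
    using J_subset by (simp add: prod.distrib prod.If_cases Int_absorb1 Int_commute)
  also have "(\<Prod>i\<in>J. lam ^ (jmax - i)) = lam ^ T"
    by (simp add: T_def power_sum)
  finally show ?thesis
    by simp
qed

lemma prod_sigma_le: "(\<Prod>i<DIM('a). \<sigma> i) * lam ^ T \<le> (\<Prod>i<DIM('a). lam ^ (DIM('a) - i))"
proof -
  have "(\<Prod>i<DIM('a). \<sigma> i) \<le> (\<Prod>i<DIM('a). sigma_bound i)"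
    by (rule prod_mono) (use sigma_pos sigma_le_sigma_bound in \<open>auto intro: less_imp_le\<close>)
  then have "(\<Prod>i<DIM('a). \<sigma> i) * lam ^ T \<le> (\<Prod>i<DIM('a). sigma_bound i) * lam ^ T"
    using lam_ge_1 by (intro mult_right_mono) auto
  then show ?thesis
    using prod_sigma_bound by simp
qed

lemma prod_power_reverse: "(\<Prod>i<DIM('a). lam ^ (DIM('a) - i)) = (\<Prod>i<DIM('a). lam ^ (i + 1))"
  by (subst prod.nat_diff_reindex[symmetric]) (auto intro!: prod.cong simp: Suc_diff_Suc)

lemma prod_sigma_mult_le: "(\<Prod>i<DIM('a). \<sigma> i) * lam \<le> (\<Prod>i<DIM('a). lam ^ (i + 1))"
proof -
  have "lam \<le> lam ^ T"
    using lam_ge_1 T_pos by (metis power_increasing power_one_right)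
  then show ?thesis
    using prod_sigma_le prod_power_reverse sigma_pos
    by (smt (verit) lessThan_iff mult_left_mono prod_nonneg)
qed

lemma norm_adjoint_A_sq: "(norm (adjoint A z))\<^sup>2 = (\<Sum>k<DIM('a). \<mu> k * (z \<bullet> v k)\<^sup>2)"
proof -
  have "(adjoint A z \<bullet> w k)\<^sup>2 = \<mu> k * (z \<bullet> v k)\<^sup>2" if k: "k < DIM('a)" for k
  proof -
    have "adjoint A z \<bullet> w k = \<sigma> k * (z \<bullet> v k)"
      using k by (simp add: inner_commute[of _ "w k"] inner_adjoint_A A_w inner_commute[of _ z])
    then show ?thesis
      using sigma_sq[OF k] by (simp add: power_mult_distrib)
  qed
  then show ?thesis
    by (simp add: frame_norm_sq[OF frame_w])
qed

lemma A_w_nonzero: "i < DIM('a) \<Longrightarrow> A (w i) \<noteq> 0"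
  using sigma_pos[of i] norm_frame_vector[OF frame_v, of i] by (auto simp: A_w)

end

text \<open>Maximality of the volume of \<open>A B + z\<close> is only used through the competitor that shrinks the
  \<open>dim F\<^sup>\<bottom>\<close> shortest axes of E to length \<open>\<lambda>\<close>, which has volume
  \<open>vol E / \<lambda>\<^bsup>0 + 1 + \<dots> + (dim F\<^sup>\<bottom> - 1)\<^esup>\<close>.\<close>

locale extremal_revolution = singular_decomposition u lam A F c w \<mu>
  for u :: "nat \<Rightarrow> 'a::euclidean_space" and lam A F c w \<mu> +
  assumes lam_gt_1: "1 < lam"
    and extremal: "measure lebesgue {y. ell_gauge u lam y \<le> 1}
      \<le> measure lebesgue (A ` cball 0 1) * lam ^ (\<Sum>l<dim (F\<^sup>\<bottom>). l)"
begin

lemma prod_power_le_prod_sigma: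
  "(\<Prod>i<DIM('a). lam ^ (DIM('a) - i)) \<le> (\<Prod>i<DIM('a). \<sigma> i) * lam ^ (\<Sum>l<dim (F\<^sup>\<bottom>). l)"
proof -
  have "(\<Prod>i<DIM('a). lam ^ (DIM('a) - i)) * measure lebesgue (cball (0::'a) 1)
      \<le> ((\<Prod>i<DIM('a). \<sigma> i) * lam ^ (\<Sum>l<dim (F\<^sup>\<bottom>). l)) * measure lebesgue (cball (0::'a) 1)"
    using extremal lam_ge_1
    by (simp add: measure_A_ball measure_ellipsoid[OF frame_u] prod_power_reverse mult_ac)
  then show ?thesis
    using content_cball_pos[of 1 "0::'a"] by simp
qed

lemma T_le: "T \<le> (\<Sum>l<dim (F\<^sup>\<bottom>). l)"
proof -
  have "(\<Prod>i<DIM('a). \<sigma> i) * lam ^ T \<le> (\<Prod>i<DIM('a). \<sigma> i) * lam ^ (\<Sum>l<dim (F\<^sup>\<bottom>). l)"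
    using prod_sigma_le prod_power_le_prod_sigma by linarith
  moreover have "0 < (\<Prod>i<DIM('a). \<sigma> i)"
    by (rule prod_pos) (simp add: sigma_pos)
  ultimately show ?thesis
    using lam_gt_1 by (simp add: power_le_imp_le_exp)
qed

lemma card_J_eq: "card J = dim (F\<^sup>\<bottom>)"
proof (rule ccontr)
  assume "card J \<noteq> dim (F\<^sup>\<bottom>)"
  then have "{..<Suc (dim (F\<^sup>\<bottom>))} \<subseteq> {..<card J}"
    using dim_perp_le_card_J by auto
  then have "(\<Sum>l<dim (F\<^sup>\<bottom>). l) + dim (F\<^sup>\<bottom>) \<le> T"
    unfolding T_eq using sum_mono2[of "{..<card J}" "{..<Suc (dim (F\<^sup>\<bottom>))}" id] by simp
  then show False
    using T_le codim_F by linarith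
qed

lemma T_eq_sum: "T = (\<Sum>l<dim (F\<^sup>\<bottom>). l)"
  by (simp add: T_eq card_J_eq)

lemma sigma_eq_sigma_bound:
  assumes i: "i < DIM('a)"
  shows "\<sigma> i = sigma_bound i"
proof (rule ccontr)
  assume "\<sigma> i \<noteq> sigma_bound i"
  then have less: "\<sigma> i < sigma_bound i"
    using sigma_le_sigma_bound[OF i] by simp
  have "(\<Prod>i<DIM('a). \<sigma> i) < (\<Prod>i<DIM('a). sigma_bound i)"
  proof (rule prod_mono_strict[of i])
    show "i \<in> {..<DIM('a)}"
      using i by simp
    show "0 \<le> \<sigma> k \<and> \<sigma> k \<le> sigma_bound k" if "k \<in> {..<DIM('a)}" for k
      using that sigma_pos[of k] sigma_le_sigma_bound[of k] by simp
  qed (simp_all add: less sigma_bound_pos)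
  then have "(\<Prod>i<DIM('a). \<sigma> i) * lam ^ T < (\<Prod>i<DIM('a). sigma_bound i) * lam ^ T"
    using lam_ge_1 by (intro mult_strict_right_mono) auto
  then show False
    using prod_sigma_bound prod_power_le_prod_sigma T_eq_sum by simp
qed

lemma abs_c_eq: "\<bar>c\<bar> = lam ^ (DIM('a) - jmax)"
  using sigma_eq_sigma_bound[OF jmax_less] sigma_J[OF jmax_in_J] jmax_in_J
  by (simp add: sigma_bound_def)

lemma sigma_outside_J:
  assumes "i < DIM('a)" "i < jmin \<or> jmax \<le> i"
  shows "\<sigma> i = lam ^ (DIM('a) - i)"
  using assms sigma_eq_sigma_bound J_eq by (auto simp: sigma_bound_def)

lemma eigval_outside_J:
  assumes "i < DIM('a)" "i < jmin \<or> jmax \<le> i"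
  shows "\<mu> i = (lam ^ (DIM('a) - i))\<^sup>2"
  using sigma_outside_J[OF assms] sigma_sq[OF assms(1)] by simp

text \<open>Equality in Courant--Fischer for the longest axes: the image of the i-th singular direction
  is the (i+1)-th longest axis of E.\<close>

lemma A_w_parallel_axis: "i < jmin \<Longrightarrow> \<exists>t. A (w i) = t *\<^sub>R u (DIM('a) - 1 - i)"
proof (induction i rule: less_induct)
  case (less i)
  have i: "i < DIM('a)"
    using less.prems jmax_less jmin_less_jmax by linarith
  define p where "p = DIM('a) - 1 - i"
  have p: "p < DIM('a)" and p1: "p + 1 = DIM('a) - i"
    using i by (auto simp: p_def)
  have "A (w i) = (A (w i) \<bullet> u p) *\<^sub>R u p"
  proof (rule frame_weighted_sum_extremal[OF frame_u p, where a = "\<lambda>l. 1 / (lam ^ (l + 1))\<^sup>2"])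
    have "(norm (A (w i)))\<^sup>2 = (lam ^ (p + 1))\<^sup>2"
      using inner_A_A_w[OF i, of "w i"] eigval_outside_J[OF i] less.prems
      by (simp add: power2_norm_eq_inner orthonormal_frameD[OF frame_w i i] flip: p1)
    then show "(\<Sum>l<DIM('a). 1 / (lam ^ (l + 1))\<^sup>2 * (A (w i) \<bullet> u l)\<^sup>2)
        \<le> 1 / (lam ^ (p + 1))\<^sup>2 * (norm (A (w i)))\<^sup>2"
      using A_ball_inside[of "w i"] norm_frame_vector[OF frame_w i] lam_ge_1
      by (simp add: ell_gauge_def)
  next
    fix l
    assume l: "p < l" "l < DIM('a)"
    define i' where "i' = DIM('a) - 1 - l"
    have i': "i' < i" "l = DIM('a) - 1 - i'"
      using l i by (auto simp: i'_def p_def)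
    then obtain t where t: "A (w i') = t *\<^sub>R u l"
      using less.IH less.prems by auto
    then have "t \<noteq> 0"
      using A_w_nonzero[of i'] i' i by auto
    moreover have "A (w i) \<bullet> A (w i') = 0"
      using inner_A_A_w[of i' "w i"] i' i by (simp add: orthonormal_frameD[OF frame_w])
    ultimately show "A (w i) \<bullet> u l = 0"
      using t by simp
  next
    fix l
    assume "l < p"
    then have "(lam ^ (l + 1))\<^sup>2 < (lam ^ (p + 1))\<^sup>2"
      using lam_gt_1 by (intro power_strict_mono power_strict_increasing) auto
    then show "1 / (lam ^ (p + 1))\<^sup>2 < 1 / (lam ^ (l + 1))\<^sup>2"
      using lam_gt_1 by (intro divide_strict_left_mono) auto
  qed
  then show ?case
    unfolding p_def by blast
qed

lemma eigval_strict_below: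
  assumes "jmax < i" "i < DIM('a)" "k < i"
  shows "\<mu> i < \<mu> k"
proof -
  have "lam ^ (DIM('a) - i) < lam ^ (DIM('a) - (i - 1))"
    using assms lam_gt_1 by (intro power_strict_increasing) auto
  then have "(lam ^ (DIM('a) - i))\<^sup>2 < (lam ^ (DIM('a) - (i - 1)))\<^sup>2"
    using lam_ge_1 by (intro power_strict_mono) auto
  moreover have "\<mu> i = (lam ^ (DIM('a) - i))\<^sup>2" "\<mu> (i - 1) = (lam ^ (DIM('a) - (i - 1)))\<^sup>2"
    by (rule eigval_outside_J; use assms in linarith)+
  ultimately have "\<mu> i < \<mu> (i - 1)"
    by simp
  also have "\<mu> (i - 1) \<le> \<mu> k"
    using eigval_antimono[of k "i - 1"] assms by simp
  finally show ?thesis .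
qed

text \<open>Equality in Courant--Fischer for the shortest axes, seen through the adjoint of A.\<close>

lemma axis_parallel_A_w: "jmax < i \<Longrightarrow> i < DIM('a) \<Longrightarrow> \<exists>t. u (DIM('a) - 1 - i) = t *\<^sub>R A (w i)"
proof (induction "DIM('a) - i" arbitrary: i rule: less_induct)
  case less
  define l where "l = DIM('a) - 1 - i"
  have l: "l < DIM('a)" and l1: "l + 1 = DIM('a) - i"
    using less.prems by (auto simp: l_def)
  have "u l = (u l \<bullet> v i) *\<^sub>R v i"
  proof (rule frame_weighted_sum_extremal[OF frame_v less.prems(2), where a = \<mu>])
    have "(norm (adjoint A (u l)))\<^sup>2 \<le> (lam ^ (l + 1))\<^sup>2"
      using norm_adjoint_A_frame_le[OF l] by (simp add: power_mono)
    then show "(\<Sum>k<DIM('a). \<mu> k * (u l \<bullet> v k)\<^sup>2) \<le> \<mu> i * (norm (u l))\<^sup>2"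
      using eigval_outside_J[of i] less.prems norm_frame_vector[OF frame_u l]
      by (simp add: norm_adjoint_A_sq flip: l1)
  next
    fix k
    assume k: "i < k" "k < DIM('a)"
    moreover have "DIM('a) - k < DIM('a) - i"
      using k by linarith
    ultimately obtain t where t: "u (DIM('a) - 1 - k) = t *\<^sub>R A (w k)"
      using less.hyps[of k] less.prems by auto
    then have t_v: "u (DIM('a) - 1 - k) = (t * \<sigma> k) *\<^sub>R v k"
      using A_w[OF k(2)] by simp
    then have "t * \<sigma> k \<noteq> 0"
      using norm_frame_vector[OF frame_u, of "DIM('a) - 1 - k"] k by auto
    moreover have "u l \<bullet> u (DIM('a) - 1 - k) = 0"
      using k orthonormal_frameD[OF frame_u l, of "DIM('a) - 1 - k"] by (simp add: l_def)
    ultimately show "u l \<bullet> v k = 0"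
      unfolding t_v by simp
  next
    fix k
    assume "k < i"
    then show "\<mu> i < \<mu> k"
      by (rule eigval_strict_below[OF less.prems])
  qed
  also have "\<dots> = ((u l \<bullet> v i) / \<sigma> i) *\<^sub>R A (w i)"
    using sigma_pos[of i] less.prems by (simp add: A_w)
  finally show ?case
    unfolding l_def by blast
qed

lemma axis_in_F:
  assumes i: "i < DIM('a)" "i \<notin> J"
  shows "u (DIM('a) - 1 - i) \<in> F"
proof -
  have AwF: "A (w i) \<in> F"
    using A_F eigvec_in_F i by (auto simp: J_def)
  consider "i < jmin" | "jmax < i"
    using i J_eq by fastforce
  then show ?thesis
  proof cases
    case 1
    then obtain t where t: "A (w i) = t *\<^sub>R u (DIM('a) - 1 - i)"
      using A_w_parallel_axis by blast
    then have "u (DIM('a) - 1 - i) = (1 / t) *\<^sub>R A (w i)"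
      using A_w_nonzero[OF i(1)] by auto
    then show ?thesis
      using AwF subspace_F by (simp add: subspace_scale)
  next
    case 2
    then show ?thesis
      using axis_parallel_A_w i AwF subspace_F by (metis subspace_scale)
  qed
qed

lemma axis_jmin_in_perp: "u (DIM('a) - 1 - jmin) \<in> F\<^sup>\<bottom>"
proof -
  define K where "K = (\<lambda>i. DIM('a) - 1 - i) ` ({..<DIM('a)} - J)"
  have K: "K \<subseteq> {..<DIM('a)}"
    by (auto simp: K_def)
  have "inj_on (\<lambda>i. DIM('a) - 1 - i) ({..<DIM('a)} - J)"
    by (rule inj_onI) (clarsimp, linarith)
  then have "card K = card ({..<DIM('a)} - J)"
    unfolding K_def by (rule card_image)
  also have "\<dots> = dim F"
    using J_subset card_J_eq dim_orthogonal_comp[OF subspace_F] by (simp add: card_Diff_subset finite_J)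
  finally have "dim (span (u ` K)) = dim F"
    using dim_span_frame[OF frame_u K] by simp
  moreover have "span (u ` K) \<subseteq> F"
    by (rule span_minimal) (use axis_in_F subspace_F in \<open>auto simp: K_def\<close>)
  ultimately have F_eq: "F = span (u ` K)"
    using subspace_F by (metis order_refl subspace_dim_equal subspace_span)
  have jmin: "jmin < DIM('a)"
    using jmin_less_jmax jmax_less by linarith
  have "orthogonal (u (DIM('a) - 1 - jmin)) y" if yK: "y \<in> u ` K" for y
  proof -
    obtain i where i: "i < DIM('a)" "i \<notin> J" and y: "y = u (DIM('a) - 1 - i)"
      using yK by (auto simp: K_def)
    have "i \<noteq> jmin"
      using i jmin_in_J by auto
    then have "DIM('a) - 1 - i \<noteq> DIM('a) - 1 - jmin"
      using i jmin by linarith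
    then show ?thesis
      using i jmin by (simp add: y orthogonal_def orthonormal_frameD[OF frame_u])
  qed
  then have "orthogonal (u (DIM('a) - 1 - jmin)) f" if "f \<in> F" for f
    using that unfolding F_eq by (rule orthogonal_to_span[rotated])
  then show ?thesis
    by (simp add: orthogonal_comp_def orthogonal_commute)
qed

lemma long_vector_in_perp:
  obtains y where "ell_gauge u lam y \<le> 1" "y \<in> F\<^sup>\<bottom>" "lam * \<bar>c\<bar> \<le> norm y"
proof
  define p where "p = DIM('a) - 1 - jmin"
  have jmin: "jmin < DIM('a)"
    using jmin_less_jmax jmax_less by linarith
  then have p: "p < DIM('a)" and p1: "p + 1 = DIM('a) - jmin"
    by (auto simp: p_def)
  show "ell_gauge u lam (lam ^ (p + 1) *\<^sub>R u p) \<le> 1"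
    using ell_gauge_frame_vector[OF frame_u p, of lam] lam_ge_1 by (simp add: ell_gauge_scaleR)
  show "lam ^ (p + 1) *\<^sub>R u p \<in> F\<^sup>\<bottom>"
    using axis_jmin_in_perp by (simp add: p_def subspace_scale subspace_orthogonal_comp)
  have "lam * \<bar>c\<bar> = lam ^ (DIM('a) - jmax + 1)"
    by (simp add: abs_c_eq)
  also have "\<dots> \<le> lam ^ (p + 1)"
    unfolding p1 using lam_ge_1 jmin_less_jmax jmax_less by (intro power_increasing) auto
  finally show "lam * \<bar>c\<bar> \<le> norm (lam ^ (p + 1) *\<^sub>R u p)"
    using norm_frame_vector[OF frame_u p] lam_ge_1 by simp
qed

end

context inscribed_revolution
begin

lemma obtain_singular_decomposition:
  obtains w \<mu> where "singular_decomposition u lam A F c w \<mu>"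
proof -
  have lin: "linear (adjoint A \<circ> A)"
    by (intro linear_compose linear_A adjoint_linear)
  have adj: "(adjoint A \<circ> A) x \<bullet> y = x \<bullet> (adjoint A \<circ> A) y" for x y
    by (simp add: inner_adjoint_A adjoint_works[OF linear_A] inner_commute)
  obtain w \<mu> where "orthonormal_frame w" "\<And>i. i < DIM('a) \<Longrightarrow> (adjoint A \<circ> A) (w i) = \<mu> i *\<^sub>R w i"
    "\<And>i j. i \<le> j \<Longrightarrow> j < DIM('a) \<Longrightarrow> \<mu> j \<le> \<mu> i"
    using self_adjoint_eigenbasis[OF lin adj] by blast
  then show ?thesis
    by (intro that[of w \<mu>]) (unfold_locales, auto)
qed

lemma measure_A_ball_mult_le:
  "measure lebesgue (A ` cball 0 1) * lam \<le> measure lebesgue {y. ell_gauge u lam y \<le> 1}"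
proof -
  obtain w \<mu> where "singular_decomposition u lam A F c w \<mu>"
    by (rule obtain_singular_decomposition)
  then interpret singular_decomposition u lam A F c w \<mu> .
  show ?thesis
    using prod_sigma_mult_le lam_ge_1 content_cball_pos[of 1 "0::'a"]
    by (simp add: measure_A_ball measure_ellipsoid[OF frame_u] mult.commute mult.left_commute)
qed

lemma long_vector_in_perp_if_extremal:
  assumes "1 < lam"
    and "measure lebesgue {y. ell_gauge u lam y \<le> 1}
      \<le> measure lebesgue (A ` cball 0 1) * lam ^ (\<Sum>l<dim (F\<^sup>\<bottom>). l)"
  obtains y where "ell_gauge u lam y \<le> 1" "y \<in> F\<^sup>\<bottom>" "lam * \<bar>c\<bar> \<le> norm y"
proof -
  obtain w \<mu> where "singular_decomposition u lam A F c w \<mu>"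
    by (rule obtain_singular_decomposition)
  then interpret extremal_revolution u lam A F c w \<mu>
    using assms by (simp add: extremal_revolution_def extremal_revolution_axioms_def)
  show ?thesis
    using long_vector_in_perp that by blast
qed

end

lemma inscribed_revolution_bounds:
  fixes F :: "'a::euclidean_space set"
  assumes u: "orthonormal_frame u" and lam: "0 < lam" and F: "subspace F"
    and A: "linear A" "inj A" "A ` F \<subseteq> F" and A_perp: "\<And>x. x \<in> F\<^sup>\<bottom> \<Longrightarrow> A x = c *\<^sub>R x"
    and codim: "2 \<le> dim (F\<^sup>\<bottom>)" and inside: "\<And>x. norm x \<le> 1 \<Longrightarrow> ell_gauge u lam (A x) \<le> 1"
    and extremal: "1 < lam \<Longrightarrow> measure lebesgue {y. ell_gauge u lam y \<le> 1}
      \<le> measure lebesgue (A ` cball 0 1) * lam ^ (\<Sum>l<dim (F\<^sup>\<bottom>). l)"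
  obtains y where "measure lebesgue (A ` cball 0 1) * lam \<le> measure lebesgue {y. ell_gauge u lam y \<le> 1}"
    "ell_gauge u lam y \<le> 1" "y \<in> F\<^sup>\<bottom>" "lam * \<bar>c\<bar> \<le> norm y"
proof (cases "lam \<le> 1")
  case True
  have nontrivial: "F\<^sup>\<bottom> \<noteq> {0}"
  proof
    assume "F\<^sup>\<bottom> = {0}"
    then show False
      using codim by (simp add: dim_singleton)
  qed
  have "compact (A ` cball 0 1)"
    using A(1) by (intro compact_continuous_image linear_continuous_on compact_cball) (simp add: linear_linear)
  then have "measure lebesgue (A ` cball 0 1) \<le> measure lebesgue {y. ell_gauge u lam y \<le> 1}"
    using inside compact_ellipsoid[OF u lam]
    by (intro measure_mono_fmeasurable) (auto intro: fmeasurableD lmeasurable_compact)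
  then have "measure lebesgue (A ` cball 0 1) * lam \<le> measure lebesgue {y. ell_gauge u lam y \<le> 1}"
    using True lam by (meson measure_nonneg mult_right_le_one_le order_trans less_imp_le)
  moreover obtain y where "ell_gauge u lam y \<le> 1" "y \<in> F\<^sup>\<bottom>" "\<bar>c\<bar> = norm y"
    using perp_vector_of_norm_abs_c[OF nontrivial A_perp inside] by blast
  moreover have "lam * \<bar>c\<bar> \<le> \<bar>c\<bar>"
    using True lam by (intro mult_left_le_one_le) auto
  ultimately show ?thesis
    using that by auto
next
  case False
  interpret inscribed_revolution u lam A F c
    using False u A A_perp codim inside F by (simp add: inscribed_revolution_def)
  obtain y where "ell_gauge u lam y \<le> 1" "y \<in> F\<^sup>\<bottom>" "lam * \<bar>c\<bar> \<le> norm y"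
    using long_vector_in_perp_if_extremal False extremal by (metis not_le)
  then show ?thesis
    using that measure_A_ball_mult_le by blast
qed

section \<open>A competing ellipsoid of revolution\<close>

lemma frame_scale_F_operator:
  fixes u :: "nat \<Rightarrow> 'a::euclidean_space"
  assumes u: "orthonormal_frame u" and a: "\<And>i. i < DIM('a) \<Longrightarrow> a i \<noteq> 0"
    and a_t: "\<And>l. l < m \<Longrightarrow> a l = t" and t: "t \<noteq> 0"
  shows "F_operator (span (u ` {m..<DIM('a)})) (frame_scale u a)"
proof -
  let ?F = "span (u ` {m..<DIM('a)})"
  have "frame_scale u a ` ?F = span (frame_scale u a ` u ` {m..<DIM('a)})"
    by (simp add: span_linear_image[OF linear_frame_scale])
  also have "\<dots> \<subseteq> ?F"
    by (rule span_minimal) (auto simp: frame_scale_frame_vector[OF u] span_base span_scale)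
  finally have F_inv: "frame_scale u a ` ?F \<subseteq> ?F" .
  have perp: "frame_scale u a x = t *\<^sub>R x" if x: "x \<in> ?F\<^sup>\<bottom>" for x
  proof (rule frame_eqI[OF u])
    fix k
    assume k: "k < DIM('a)"
    show "frame_scale u a x \<bullet> u k = t *\<^sub>R x \<bullet> u k"
    proof (cases "k < m")
      case False
      then have "u k \<in> ?F"
        using k by (intro span_base) auto
      then have "x \<bullet> u k = 0"
        by (rule inner_orthogonal_comp[OF x])
      then show ?thesis
        by (simp add: inner_frame_scale[OF u k])
    qed (simp add: inner_frame_scale[OF u k] a_t)
  qed
  show ?thesis
    unfolding F_operator_def
  proof (intro conjI)
    show "bij (frame_scale u a)"
      using a by (rule bij_frame_scale[OF u])
    show "frame_scale u a ` (?F\<^sup>\<bottom>) \<subseteq> ?F\<^sup>\<bottom>"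
    proof
      fix y
      assume "y \<in> frame_scale u a ` (?F\<^sup>\<bottom>)"
      then obtain x where "x \<in> ?F\<^sup>\<bottom>" "y = frame_scale u a x"
        by blast
      then show "y \<in> ?F\<^sup>\<bottom>"
        using perp subspace_scale[OF subspace_orthogonal_comp] by simp
    qed
    show "\<exists>c. c \<noteq> 0 \<and> (\<forall>x\<in>?F\<^sup>\<bottom>. frame_scale u a x = c *\<^sub>R x)"
      using perp t by blast
  qed (use linear_frame_scale F_inv in auto)
qed

lemma frame_scale_ball_in_ellipsoid:
  fixes u :: "nat \<Rightarrow> 'a::euclidean_space"
  assumes u: "orthonormal_frame u" and lam: "0 < lam"
    and a: "\<And>i. i < DIM('a) \<Longrightarrow> \<bar>a i\<bar> \<le> lam ^ (i + 1)"
  shows "frame_scale u a ` cball 0 1 \<subseteq> {y. ell_gauge u lam y \<le> 1}"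
proof
  fix y
  assume "y \<in> frame_scale u a ` cball 0 1"
  then obtain x where x: "norm x \<le> 1" and y: "y = frame_scale u a x"
    by auto
  have "(frame_scale u a x \<bullet> u i)\<^sup>2 / (lam ^ (i + 1))\<^sup>2 \<le> (x \<bullet> u i)\<^sup>2"
    if i: "i \<in> {..<DIM('a)}" for i
  proof -
    have "\<bar>a i\<bar>\<^sup>2 \<le> (lam ^ (i + 1))\<^sup>2"
      using i by (intro power_mono a) auto
    then have "(a i)\<^sup>2 * (x \<bullet> u i)\<^sup>2 \<le> (lam ^ (i + 1))\<^sup>2 * (x \<bullet> u i)\<^sup>2"
      by (intro mult_right_mono) auto
    then show ?thesis
      using i lam by (simp add: inner_frame_scale[OF u] divide_le_eq power_mult_distrib mult.commute)
  qed
  then have "ell_gauge u lam y \<le> (\<Sum>i<DIM('a). (x \<bullet> u i)\<^sup>2)"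
    unfolding ell_gauge_def y by (rule sum_mono)
  also have "\<dots> \<le> 1"
    using x by (simp add: frame_norm_sq[OF u, symmetric] power_le_one)
  finally show "y \<in> {y. ell_gauge u lam y \<le> 1}"
    by simp
qed

text \<open>The competitor keeps the s longest axes of E and shrinks the others to length \<open>\<lambda>\<close>.\<close>

lemma revolution_competitor:
  fixes u :: "nat \<Rightarrow> 'a::euclidean_space"
  assumes u: "orthonormal_frame u" and lam: "1 \<le> lam" and s: "s \<le> DIM('a)"
  obtains E0 where "ellipsoid_rev_dim s E0" "E0 \<subseteq> {y. ell_gauge u lam y \<le> 1}"
    "measure lebesgue E0 * lam ^ (\<Sum>l<DIM('a) - s. l) = measure lebesgue {y. ell_gauge u lam y \<le> 1}"
proof
  define m where "m = DIM('a) - s"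
  define a where "a l = (if l < m then lam else lam ^ (l + 1))" for l
  have a_pos: "0 < a l" for l
    using lam by (simp add: a_def)
  have "F_operator (span (u ` {m..<DIM('a)})) (frame_scale u a)"
    using a_pos lam by (intro frame_scale_F_operator[OF u, where t = lam]) (auto simp: a_def)
  moreover have "dim (span (u ` {m..<DIM('a)})) = s"
    using dim_span_frame[OF u, of "{m..<DIM('a)}"] s by (simp add: m_def subset_iff)
  ultimately show "ellipsoid_rev_dim s (frame_scale u a ` cball 0 1)"
    unfolding ellipsoid_rev_dim_def ellipsoid_rev_def
    by (intro exI[of _ "span (u ` {m..<DIM('a)})"] conjI exI[of _ "frame_scale u a"] exI[of _ 0]) auto
  show "frame_scale u a ` cball 0 1 \<subseteq> {y. ell_gauge u lam y \<le> 1}"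
    using lam a_pos by (intro frame_scale_ball_in_ellipsoid[OF u]) (auto simp: a_def less_imp_le)
  have "(\<Prod>i<DIM('a). lam ^ (i + 1)) = (\<Prod>i<DIM('a). a i * (if i < m then lam ^ i else 1))"
    by (rule prod.cong) (auto simp: a_def)
  also have "\<dots> = (\<Prod>i<DIM('a). a i) * (\<Prod>i<DIM('a). if i < m then lam ^ i else 1)"
    by (simp add: prod.distrib)
  also have "(\<Prod>i<DIM('a). if i < m then lam ^ i else 1) = (\<Prod>i<m. lam ^ i)"
  proof -
    have "{..<DIM('a)} \<inter> {i. i < m} = {..<m}"
      by (auto simp: m_def)
    then show ?thesis
      by (simp add: prod.If_cases)
  qed
  also have "(\<Prod>i<m. lam ^ i) = lam ^ (\<Sum>l<m. l)"
    by (simp add: power_sum)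
  finally show "measure lebesgue (frame_scale u a ` cball 0 1) * lam ^ (\<Sum>l<DIM('a) - s. l)
      = measure lebesgue {y. ell_gauge u lam y \<le> 1}"
    using lam by (simp add: measure_frame_scale_cball[OF u a_pos] measure_ellipsoid[OF u] m_def)
qed

section \<open>Projection onto the complement of the axis\<close>

lemma orth_proj_revolution:
  fixes F :: "'a::euclidean_space set"
  assumes F: "subspace F" and A: "linear A" "A ` F \<subseteq> F"
    and A_perp: "\<And>x. x \<in> F\<^sup>\<bottom> \<Longrightarrow> A x = c *\<^sub>R x"
  shows "orth_proj (F\<^sup>\<bottom>) z \<in> orth_proj (F\<^sup>\<bottom>) ` (\<lambda>x. A x + z) ` cball 0 1"
    and "orth_proj (F\<^sup>\<bottom>) ` (\<lambda>x. A x + z) ` cball 0 1 \<subseteq> cball (orth_proj (F\<^sup>\<bottom>) z) \<bar>c\<bar>"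
proof -
  obtain f0 h0 where f0: "f0 \<in> F" and h0: "h0 \<in> F\<^sup>\<bottom>" and z: "z = f0 + h0"
    using orthogonal_comp_decomp[OF F] by blast
  have proj_z: "orth_proj (F\<^sup>\<bottom>) z = h0"
    using orth_proj_add_orthogonal_comp[OF f0 h0] z by simp
  have "z \<in> (\<lambda>x. A x + z) ` cball 0 1"
    using linear_0[OF A(1)] by force
  then show "orth_proj (F\<^sup>\<bottom>) z \<in> orth_proj (F\<^sup>\<bottom>) ` (\<lambda>x. A x + z) ` cball 0 1"
    by (rule imageI)
  show "orth_proj (F\<^sup>\<bottom>) ` (\<lambda>x. A x + z) ` cball 0 1 \<subseteq> cball (orth_proj (F\<^sup>\<bottom>) z) \<bar>c\<bar>"
  proof safe
    fix x :: 'a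
    assume x: "x \<in> cball 0 1"
    obtain f h where f: "f \<in> F" and h: "h \<in> F\<^sup>\<bottom>" and xfh: "x = f + h"
      using orthogonal_comp_decomp[OF F] by blast
    have "A f + f0 \<in> F"
      using A(2) f f0 F by (auto intro: subspace_add)
    moreover have "c *\<^sub>R h + h0 \<in> F\<^sup>\<bottom>"
      using h h0 by (simp add: subspace_add subspace_scale subspace_orthogonal_comp)
    moreover have "A x + z = (A f + f0) + (c *\<^sub>R h + h0)"
      by (simp add: xfh z linear_add[OF A(1)] A_perp[OF h] algebra_simps)
    ultimately have "orth_proj (F\<^sup>\<bottom>) (A x + z) = c *\<^sub>R h + h0"
      by (simp add: orth_proj_add_orthogonal_comp)
    moreover have "orthogonal f h"
      using inner_orthogonal_comp[OF h f] by (simp add: orthogonal_def inner_commute)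
    then have "norm h \<le> 1"
      using norm_le_norm_add_orthogonal[of f h] x xfh by simp
    then have "\<bar>c\<bar> * norm h \<le> \<bar>c\<bar>"
      by (rule mult_left_le) simp
    ultimately show "orth_proj (F\<^sup>\<bottom>) (A x + z) \<in> cball (orth_proj (F\<^sup>\<bottom>) z) \<bar>c\<bar>"
      by (simp add: proj_z dist_norm)
  qed
qed

lemma rel_interior_in_ball:
  fixes P :: "'a::euclidean_space set"
  assumes q: "q \<in> P" and P: "P \<subseteq> cball q r" and r: "0 < r" and p: "p \<in> rel_interior P"
  shows "dist q p < r"
proof (rule ccontr)
  assume "\<not> dist q p < r"
  then have d: "dist q p = r"
    using P rel_interior_subset p by fastforce
  obtain e where e: "0 < e" and ball: "ball p e \<inter> affine hull P \<subseteq> P"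
    using p by (auto simp: mem_rel_interior_ball)
  define t where "t = e / (2 * r)"
  have t: "0 < t"
    using e r by (simp add: t_def)
  define p' where "p' = p + t *\<^sub>R (p - q)"
  have "p' \<in> affine hull P"
    unfolding p'_def using q rel_interior_subset p by (intro mem_affine_3_minus) (auto intro: hull_inc)
  moreover have "dist p p' < e"
    using t d e r by (simp add: p'_def dist_norm t_def norm_minus_commute)
  ultimately have "p' \<in> P"
    using ball by auto
  then have "dist q p' \<le> r"
    using P by auto
  moreover have "p' - q = (1 + t) *\<^sub>R (p - q)"
    by (simp add: p'_def algebra_simps)
  then have "dist q p' = (1 + t) * r"
    using t d by (simp add: dist_norm norm_minus_commute[of q])
  ultimately show False
    using mult_pos_pos[OF r t] by (simp add: algebra_simps)
qed

lemma symmetric_not_subset_scaled_rel_interior: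
  fixes P S :: "'a::euclidean_space set"
  assumes q: "q \<in> P" and P: "P \<subseteq> cball q r" and r: "0 < r" and lam: "0 < lam"
    and y: "y \<in> S" "- y \<in> S" and long: "lam * r \<le> norm y"
  shows "\<not> S \<subseteq> (\<lambda>p. x + lam *\<^sub>R p) ` rel_interior P"
proof
  assume "S \<subseteq> (\<lambda>p. x + lam *\<^sub>R p) ` rel_interior P"
  then obtain p1 p2 where p: "p1 \<in> rel_interior P" "p2 \<in> rel_interior P"
    and y1: "y = x + lam *\<^sub>R p1" and y2: "- y = x + lam *\<^sub>R p2"
    using y by blast
  have "2 *\<^sub>R y = y - (- y)"
    by (simp add: scaleR_2)
  also have "\<dots> = (x + lam *\<^sub>R p1) - (x + lam *\<^sub>R p2)"
    by (simp only: y2[symmetric]) (simp add: y1)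
  also have "\<dots> = lam *\<^sub>R ((p1 - q) - (p2 - q))"
    by (simp add: algebra_simps)
  finally have "2 *\<^sub>R y = lam *\<^sub>R ((p1 - q) - (p2 - q))" .
  then have "2 * norm y = lam * norm ((p1 - q) - (p2 - q))"
    using lam by (metis abs_of_pos norm_scaleR zero_less_numeral abs_numeral)
  also have "\<dots> \<le> lam * (dist q p1 + dist q p2)"
    using lam norm_triangle_ineq4[of "p1 - q" "p2 - q"]
    by (simp add: dist_norm norm_minus_commute)
  also have "\<dots> < lam * (2 * r)"
    using rel_interior_in_ball[OF q P r p(1)] rel_interior_in_ball[OF q P r p(2)] lam by simp
  finally show False
    using long by linarith
qed

lemma not_subset_scaled_projection:
  fixes F S :: "'a::euclidean_space set"
  assumes F: "subspace F" and A: "linear A" "A ` F \<subseteq> F"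
    and A_perp: "\<And>x. x \<in> F\<^sup>\<bottom> \<Longrightarrow> A x = c *\<^sub>R x" and c: "c \<noteq> 0" and lam: "0 < lam"
    and y: "y \<in> S" "- y \<in> S" "lam * \<bar>c\<bar> \<le> norm y"
  shows "\<not> S \<subseteq> (\<lambda>p. x + lam *\<^sub>R p) ` rel_interior (orth_proj (F\<^sup>\<bottom>) ` (\<lambda>x. A x + z) ` cball 0 1)"
  using symmetric_not_subset_scaled_rel_interior[OF orth_proj_revolution[OF F A A_perp] _ lam y] c
  by simp

theorem mainTheorem7:
  fixes E E' F :: "'a::euclidean_space set"
    and u :: "nat \<Rightarrow> 'a" and s :: nat and lam :: real
  assumes s_le: "s + 2 \<le> DIM('a)"
    and lam_pos: "lam > 0"
    and u_orthonormal: "\<forall>i<DIM('a). \<forall>j<DIM('a). u i \<bullet> u j = (if i = j then 1 else 0)"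
    and E_def: "E = {x. (\<Sum>i<DIM('a). (x \<bullet> u i)\<^sup>2 / (lam ^ (i + 1))\<^sup>2) \<le> 1}"
    and E'_rev: "ellipsoid_rev_dim s E'"
    and E'_sub: "E' \<subseteq> E"
    and E'_max: "\<forall>E''. ellipsoid_rev_dim s E'' \<and> E'' \<subseteq> E \<longrightarrow>
                    measure lebesgue E'' \<le> measure lebesgue E'"
    and F_sub: "subspace F" and F_dim: "dim F = s"
    and F_axis: "ellipsoid_rev F E'"
  shows "measure lebesgue E' / measure lebesgue E \<le> 1 / lam \<and>
         (\<forall>x. \<not> (E \<inter> F\<^sup>\<bottom> \<subseteq>
              (\<lambda>y. x + lam *\<^sub>R y) ` rel_interior (orth_proj (F\<^sup>\<bottom>) ` E')))"
proof -
  have u: "orthonormal_frame u" and E: "E = {y. ell_gauge u lam y \<le> 1}"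
    using u_orthonormal E_def by (simp_all add: orthonormal_frame_def ell_gauge_def)
  obtain A z c where A: "linear A" "bij A" "A ` F \<subseteq> F" and c: "c \<noteq> 0"
    and A_perp: "\<And>x. x \<in> F\<^sup>\<bottom> \<Longrightarrow> A x = c *\<^sub>R x" and E': "E' = (\<lambda>x. A x + z) ` cball 0 1"
    using F_axis unfolding ellipsoid_rev_def F_operator_def by blast
  have inside: "\<And>x. norm x \<le> 1 \<Longrightarrow> ell_gauge u lam (A x) \<le> 1"
    using centered_image_in_ellipsoid[OF A(1)] E'_sub unfolding E E' by blast
  have codim: "2 \<le> dim (F\<^sup>\<bottom>)" and m: "dim (F\<^sup>\<bottom>) = DIM('a) - s"
    using dim_orthogonal_comp[OF F_sub] F_dim s_le by linarith+
  have vol_E': "measure lebesgue E' = measure lebesgue (A ` cball 0 1)"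
    unfolding E' using measure_translation[of z "A ` cball 0 1"] by (simp add: image_image add.commute)
  have extremal: "measure lebesgue E \<le> measure lebesgue (A ` cball 0 1) * lam ^ (\<Sum>l<dim (F\<^sup>\<bottom>). l)"
    if lam_gt: "1 < lam"
  proof -
    have "s \<le> DIM('a)"
      using s_le by simp
    then obtain E0 where "ellipsoid_rev_dim s E0" "E0 \<subseteq> E"
      and "measure lebesgue E0 * lam ^ (\<Sum>l<dim (F\<^sup>\<bottom>). l) = measure lebesgue E"
      using revolution_competitor[OF u less_imp_le[OF lam_gt]] unfolding E m by blast
    then show ?thesis
      using E'_max vol_E' lam_pos by (metis mult_right_mono zero_le_power less_imp_le)
  qed
  obtain y where vol: "measure lebesgue E' * lam \<le> measure lebesgue E"
    and y: "y \<in> E \<inter> F\<^sup>\<bottom>" "lam * \<bar>c\<bar> \<le> norm y"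
    using inscribed_revolution_bounds[OF u lam_pos F_sub A(1) bij_is_inj[OF A(2)] A(3) A_perp codim
        inside extremal[unfolded E]] vol_E' unfolding E by auto
  have "measure lebesgue E' / measure lebesgue E \<le> 1 / lam"
    using vol lam_pos measure_ellipsoid_pos[OF u lam_pos] unfolding E
    by (simp add: divide_simps mult.commute)
  moreover have "- y \<in> E \<inter> F\<^sup>\<bottom>"
    using y by (simp add: E ell_gauge_uminus subspace_neg subspace_orthogonal_comp)
  ultimately show ?thesis
    using not_subset_scaled_projection[OF F_sub A(1,3) A_perp c lam_pos] y unfolding E' by blast
qed

end
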